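(* Let $\boldsymbol{\lambda}\in\Delta_N$, $\boldsymbol{\nu}=(\nu_1,\dots,\nu_N)\in\mathcal{P}_1(\mathbb{R})^N$, $\theta\in[0,1]$ and $\mu^\theta=\mathrm{HMed}_{\boldsymbol{\lambda}}(\theta,\boldsymbol{\nu})$. Assume $\nu_1,\dots,\nu_N$ are absolutely continuous with respect to Lebesgue measure with densities $f_1,\dots,f_N\in L^1(\mathbb{R})$. Then: (i) $\mu^0$ and $\mu^1$ are absolutely continuous with densities $f_{\mu^0},f_{\mu^1}$ satisfying $$\min_{1\le i\le N}f_i\le\min(f_{\mu^0},f_{\mu^1})\le\max(f_{\mu^0},f_{\mu^1})\le\max_{1\le i\le N}f_i\quad\text{a.e. on }\mathbb{R};$$ (ii) for every $\theta\in[0,1]$, $\mu^\theta$ is absolutely continuous, with density denoted $f_{\mu^\theta}$; (iii) if for some $p\in[1,\infty]$, $f_i\in L^p(\mathbb{R})$ for $i=1,\dots,N$, then $f_{\mu^\theta}\in L^p(\mathbb{R})$ and $$\|f_{\mu^\theta}\|_{L^p(\mathbb{R})}\le\|\max_{1\le i\le N}f_i\|_{L^p(\mathbb{R})}\le\sum_{i=1}^N\|f_i\|_{L^p(\mathbb{R})}.$$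
   Context: $\Delta_N=\{(\lambda_1,\dots,\lambda_N)\in\mathbb{R}_+^N:\sum_i\lambda_i=1\}$; $\mathcal{P}_1(\mathbb{R})$ denotes Borel probability measures on $\mathbb{R}$ with finite first moment. For $\nu\in\mathcal{P}_1(\mathbb{R})$, $F_\nu(x)=\nu((-\infty,x])$ and the quantile function is $Q_\nu(t)=\inf\{x\in\mathbb{R}:F_\nu(x)\ge t\}$; one has $(Q_\nu)_\#\mathcal{L}=\nu$ where $\mathcal{L}$ is Lebesgue measure on $[0,1]$. For $\mathbf{x}\in\mathbb{R}^N$, $\mathrm{M}^-_{\boldsymbol{\lambda}}(\mathbf{x})=\inf\{y:\sum_{i:x_i\le y}\lambda_i\ge\frac12\}$ and $\mathrm{M}^+_{\boldsymbol{\lambda}}(\mathbf{x})=\sup\{y:\sum_{i:x_i<y}\lambda_i\le\frac12\}$. Set, for $t\in(0,1)$, $Q^\pm(t)=\mathrm{M}^\pm_{\boldsymbol{\lambda}}(Q_{\nu_1}(t),\dots,Q_{\nu_N}(t))$ and $Q_\theta=(1-\theta)Q^-+\theta Q^+$; $Q_\theta$ is nondecreasing, left-continuous and integrable, hence the quantile function of a probability measure $\mathrm{HMed}_{\boldsymbol{\lambda}}(\theta,\boldsymbol{\nu}):=(Q_\theta)_\#\mathcal{L}\in\mathcal{P}_1(\mathbb{R})$ (horizontal median selection). *)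

theory Defs
  imports "HOL-Probability.Probability"
begin

definition quantile :: "real measure \<Rightarrow> real \<Rightarrow> real" where
  "quantile M t = Inf {x. cdf M x \<ge> t}"

definition med_minus :: "nat \<Rightarrow> (nat \<Rightarrow> real) \<Rightarrow> (nat \<Rightarrow> real) \<Rightarrow> real" where
  "med_minus N lam x = Inf {y. (\<Sum>i\<in>{i\<in>{..<N}. x i \<le> y}. lam i) \<ge> 1/2}"

definition med_plus :: "nat \<Rightarrow> (nat \<Rightarrow> real) \<Rightarrow> (nat \<Rightarrow> real) \<Rightarrow> real" where
  "med_plus N lam x = Sup {y. (\<Sum>i\<in>{i\<in>{..<N}. x i < y}. lam i) \<le> 1/2}"

text \<open>Q_theta on (0,1); the values at t = 0, 1 are irrelevant (Lebesgue null) and set to 0.\<close>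
definition Q_theta :: "nat \<Rightarrow> (nat \<Rightarrow> real) \<Rightarrow> real \<Rightarrow> (nat \<Rightarrow> real measure) \<Rightarrow> real \<Rightarrow> real" where
  "Q_theta N lam \<theta> \<nu> t =
     (if 0 < t \<and> t < 1 then
        (1 - \<theta>) * med_minus N lam (\<lambda>i. quantile (\<nu> i) t)
        + \<theta> * med_plus N lam (\<lambda>i. quantile (\<nu> i) t)
      else 0)"

definition HMed :: "nat \<Rightarrow> (nat \<Rightarrow> real) \<Rightarrow> real \<Rightarrow> (nat \<Rightarrow> real measure) \<Rightarrow> real measure" where
  "HMed N lam \<theta> \<nu> = distr (restrict_space lborel {0..1}) borel (Q_theta N lam \<theta> \<nu>)"

definition is_density :: "real measure \<Rightarrow> (real \<Rightarrow> real) \<Rightarrow> bool" where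
  "is_density M g \<longleftrightarrow> g \<in> borel_measurable borel \<and> (\<forall>x. 0 \<le> g x)
     \<and> M = density lborel (\<lambda>x. ennreal (g x))"

definition memLp :: "ereal \<Rightarrow> (real \<Rightarrow> real) \<Rightarrow> bool" where
  "memLp p f \<longleftrightarrow> f \<in> borel_measurable borel \<and>
     (if p = \<infinity> then esssup lborel (\<lambda>x. ereal \<bar>f x\<bar>) < \<infinity>
      else integrable lborel (\<lambda>x. \<bar>f x\<bar> powr real_of_ereal p))"

definition Lp_norm :: "ereal \<Rightarrow> (real \<Rightarrow> real) \<Rightarrow> real" where
  "Lp_norm p f =
     (if p = \<infinity> then real_of_ereal (esssup lborel (\<lambda>x. ereal \<bar>f x\<bar>))
      else (\<integral>x. \<bar>f x\<bar> powr real_of_ereal p \<partial>lborel) powr (1 / real_of_ereal p))"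

end

theory Submission
  imports Defs
begin

(*
  Write F\<^sub>i for the distribution function of \<nu>\<^sub>i.  For \<theta> \<in> {0, 1} and 0 < t < 1 we have
  Q\<^sub>\<theta>(t) \<le> x iff the \<lambda>-mass of {i. t \<le> F\<^sub>i(x)} is \<ge> 1/2 (\<theta> = 0) resp. > 1/2 (\<theta> = 1),
  so the distribution function of \<mu>\<^sup>\<theta> is a weighted median of F\<^sub>1, ..., F\<^sub>N.  The
  increment of a weighted median lies between the smallest and the largest increment of
  its arguments, hence min\<^sub>i \<nu>\<^sub>i(a,b] \<le> \<mu>\<^sup>\<theta>(a,b] \<le> max\<^sub>i \<nu>\<^sub>i(a,b] on every interval, and
  comparing measures through intervals gives \<integral>\<^sub>A min\<^sub>i f\<^sub>i \<le> \<mu>\<^sup>\<theta>(A) \<le> \<integral>\<^sub>A max\<^sub>i f\<^sub>i: this is (i).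

  In particular \<mu>\<^sup>0 and \<mu>\<^sup>1 have no atoms, so Q\<^sub>0 and Q\<^sub>1 are strictly increasing, and for
  0 < \<theta> < 1 the measure \<mu>\<^sup>\<theta> is the image of \<mu>\<^sup>j under Q\<^sub>\<theta> \<circ> Q\<^sub>j\<^sup>-\<^sup>1 (j = 0, 1).  Since
  Q\<^sub>\<theta> = (1 - \<theta>) Q\<^sub>0 + \<theta> Q\<^sub>1, the oscillations of Q\<^sub>0 and Q\<^sub>1 on {t. Q\<^sub>\<theta>(t) \<in> (a,b]} satisfy
  (1 - \<theta>) osc Q\<^sub>0 + \<theta> osc Q\<^sub>1 \<le> b - a, so the preimages A\<^sub>0, A\<^sub>1 of a Borel set A satisfy
  (1 - \<theta>)|A\<^sub>0| + \<theta>|A\<^sub>1| \<le> |A|.  Together with \<mu>\<^sup>j(B) \<le> s|B| + \<integral>(max\<^sub>i f\<^sub>i - s)\<^sup>+ this gives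
  \<mu>\<^sup>\<theta>(A) \<le> s|A| + \<integral>(max\<^sub>i f\<^sub>i - s)\<^sup>+ for all \<theta> \<in> [0,1] and s \<ge> 0.  This yields (ii) and, for
  the density g of \<mu>\<^sup>\<theta>, \<integral>(g - s)\<^sup>+ \<le> \<integral>(max\<^sub>i f\<^sub>i - s)\<^sup>+ for every s > 0, from which (iii)
  follows by the layer-cake formula y\<^sup>p = \<integral>\<^sub>0\<^sup>\<infinity> p (p - 1) r\<^sup>p\<^sup>-\<^sup>2 (y - r)\<^sup>+ dr (for p = \<infinity>, by
  taking s just above the essential supremum of max\<^sub>i f\<^sub>i).  Finally
  \<parallel>max\<^sub>i f\<^sub>i\<parallel>\<^sub>p \<le> \<Sum>\<^sub>i \<parallel>f\<^sub>i\<parallel>\<^sub>p because (max\<^sub>i f\<^sub>i)\<^sup>p \<le> \<Sum>\<^sub>i f\<^sub>i\<^sup>p and r \<mapsto> r\<^sup>1\<^sup>/\<^sup>p is subadditive.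
*)

section \<open>Comparing measures on the real line\<close>

definition add_measure :: "'a measure \<Rightarrow> 'a measure \<Rightarrow> 'a measure" where
  "add_measure M N = measure_of (space M) (sets M) (\<lambda>A. emeasure M A + emeasure N A)"

lemma sets_add_measure[simp]: "sets (add_measure M N) = sets M"
  by (simp add: add_measure_def)

lemma emeasure_add_measure:
  assumes "sets N = sets M" and "A \<in> sets M"
  shows "emeasure (add_measure M N) A = emeasure M A + emeasure N A"
  unfolding add_measure_def
proof (rule emeasure_measure_of_sigma)
  show "sigma_algebra (space M) (sets M)" ..
  show "positive (sets M) (\<lambda>A. emeasure M A + emeasure N A)"
    by (simp add: positive_def)
  show "countably_additive (sets M) (\<lambda>A. emeasure M A + emeasure N A)"
  proof (rule countably_additiveI)
    fix A :: "nat \<Rightarrow> _" assume A: "range A \<subseteq> sets M" and "disjoint_family A"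
    then show "(\<Sum>i. emeasure M (A i) + emeasure N (A i)) = emeasure M (\<Union>i. A i) + emeasure N (\<Union>i. A i)"
      using \<open>sets N = sets M\<close> by (simp add: suminf_add[symmetric] suminf_emeasure)
  qed
qed (rule assms)

lemma finite_borel_measure_eq_add_interval_measure:
  fixes M N :: "real measure"
  assumes M: "finite_borel_measure M" and N: "finite_borel_measure N"
    and le: "\<And>a b. a \<le> b \<Longrightarrow> emeasure M {a<..b} \<le> emeasure N {a<..b}"
  shows "N = add_measure M (interval_measure (\<lambda>x. cdf N x - cdf M x))"
proof -
  interpret M: finite_borel_measure M by (rule M)
  interpret N: finite_borel_measure N by (rule N)
  define G where "G x = cdf N x - cdf M x" for x
  have G_diff: "G b - G a = measure N {a<..b} - measure M {a<..b}" if "a \<le> b" for a b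
  proof (cases "a = b")
    case False
    then show ?thesis using M.cdf_diff_eq[of a b] N.cdf_diff_eq[of a b] that by (simp add: G_def)
  qed simp
  have G_diff_nonneg: "0 \<le> G b - G a" if "a \<le> b" for a b
    using le[OF that] G_diff[OF that] by (simp add: M.emeasure_eq_measure N.emeasure_eq_measure)
  have "continuous (at_right a) G" for a
    unfolding G_def by (intro continuous_intros M.cdf_is_right_cont N.cdf_is_right_cont)
  then have R: "emeasure (interval_measure G) {a<..b} = G b - G a" if "a \<le> b" for a b
    using G_diff_nonneg by (intro emeasure_interval_measure_Ioc[OF that]) auto
  define S where "S = add_measure M (interval_measure G)"
  have S: "emeasure S X = emeasure M X + emeasure (interval_measure G) X" if "X \<in> sets borel" for X
    unfolding S_def using that M.M_is_borel by (intro emeasure_add_measure) simp_all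
  have "N = S"
  proof (rule measure_eqI_generator_eq[where \<Omega>=UNIV and E="range (\<lambda>(a, b). {a<..b::real})"
        and A="\<lambda>i. {- real i<..real i}"])
    fix X assume "X \<in> range (\<lambda>(a, b). {a<..b::real})"
    then obtain a b where X: "X = {a<..b}" by auto
    show "emeasure N X = emeasure S X"
    proof (cases "a \<le> b")
      case True
      have "emeasure S X = ennreal (measure M X) + ennreal (G b - G a)"
        using S[of X] R[OF True] X by (simp add: M.emeasure_eq_measure)
      also have "\<dots> = ennreal (measure N X)"
        using G_diff[OF True] G_diff_nonneg[OF True] X by (simp flip: ennreal_plus)
      finally show ?thesis by (simp add: N.emeasure_eq_measure)
    qed (use X in simp)
  next
    fix i :: nat
    show "emeasure N {- real i<..real i} \<noteq> \<infinity>" by simp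
  qed (auto simp: Int_stable_def S_def M.M_is_borel N.M_is_borel borel_sigma_sets_Ioc UN_Ioc_eq_UNIV)
  then show ?thesis unfolding S_def G_def .
qed

lemma emeasure_le_of_Ioc_le_finite:
  fixes M N :: "real measure"
  assumes M: "finite_borel_measure M" and N: "finite_borel_measure N"
    and le: "\<And>a b. a \<le> b \<Longrightarrow> emeasure M {a<..b} \<le> emeasure N {a<..b}"
    and A: "A \<in> sets borel"
  shows "emeasure M A \<le> emeasure N A"
proof -
  define R where "R = interval_measure (\<lambda>x. cdf N x - cdf M x)"
  have "N = add_measure M R"
    unfolding R_def using M N le by (rule finite_borel_measure_eq_add_interval_measure)
  moreover have "emeasure (add_measure M R) A = emeasure M A + emeasure R A"
    using M A by (intro emeasure_add_measure)
      (simp_all add: R_def finite_borel_measure_def finite_borel_measure_axioms_def)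
  ultimately show ?thesis by simp
qed

lemma finite_borel_measure_restricted:
  fixes K :: "real measure"
  assumes "sets K = sets borel" and "I \<in> sets borel" and "emeasure K I < \<infinity>"
  shows "finite_borel_measure (density K (indicator I))"
proof -
  have "finite_measure (density K (indicator I))"
    using assms by (intro finite_measureI) (simp add: emeasure_restricted sets_eq_imp_space_eq[OF assms(1)])
  then show ?thesis
    using assms(1) by (simp add: finite_borel_measure_def finite_borel_measure_axioms_def)
qed

lemma emeasure_eq_SUP_Ioc_Int:
  fixes K :: "real measure"
  assumes "sets K = sets borel" and "A \<in> sets borel"
  shows "emeasure K A = (SUP n::nat. emeasure K ({- real n<..real n} \<inter> A))"
proof -
  have "(SUP n::nat. emeasure K ({- real n<..real n} \<inter> A)) = emeasure K (\<Union>n. {- real n<..real n} \<inter> A)"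
  proof (rule SUP_emeasure_incseq)
    show "range (\<lambda>n. {- real n<..real n} \<inter> A) \<subseteq> sets K"
      using assms by (simp add: image_subset_iff sets.Int)
    show "incseq (\<lambda>n. {- real n<..real n} \<inter> A)"
      unfolding incseq_def by auto
  qed
  also have "(\<Union>n. {- real n<..real n} \<inter> A) = A"
    using UN_Ioc_eq_UNIV by auto
  finally show ?thesis ..
qed

lemma emeasure_le_of_Ioc_le:
  fixes M N :: "real measure"
  assumes sets_M: "sets M = sets borel" and sets_N: "sets N = sets borel"
    and le: "\<And>a b. a \<le> b \<Longrightarrow> emeasure M {a<..b} \<le> emeasure N {a<..b}"
    and fin: "\<And>a b. emeasure N {a<..b} < \<infinity>"
    and A: "A \<in> sets borel"
  shows "emeasure M A \<le> emeasure N A"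
proof -
  define I where "I n = {- real n<..real n}" for n :: nat
  have I_sets[simp]: "I n \<in> sets borel" for n
    by (simp add: I_def)
  have le_I: "emeasure M (I n \<inter> {a<..b}) \<le> emeasure N (I n \<inter> {a<..b})" for n a b
  proof -
    have "I n \<inter> {a<..b} = {max (- real n) a <.. min (real n) b}"
      by (auto simp: I_def)
    then show ?thesis by (cases "max (- real n) a \<le> min (real n) b") (auto intro!: le)
  qed
  have M_I: "emeasure (density M (indicator (I n))) X = emeasure M (I n \<inter> X)"
    and N_I: "emeasure (density N (indicator (I n))) X = emeasure N (I n \<inter> X)"
    if "X \<in> sets borel" for n X
    using that by (simp_all add: sets_M sets_N emeasure_restricted)
  have N_I_fin: "emeasure N (I n) < \<infinity>" for n
    unfolding I_def by (rule fin)
  have M_I_fin: "emeasure M (I n) < \<infinity>" for n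
    using le_I[of n "- real n" "real n"] N_I_fin[of n] by (auto simp: I_def)
  have "emeasure M (I n \<inter> A) \<le> emeasure N (I n \<inter> A)" for n
  proof -
    have "emeasure (density M (indicator (I n))) A \<le> emeasure (density N (indicator (I n))) A"
    proof (rule emeasure_le_of_Ioc_le_finite[OF _ _ _ A])
      show "finite_borel_measure (density M (indicator (I n)))"
        using sets_M M_I_fin by (intro finite_borel_measure_restricted) auto
      show "finite_borel_measure (density N (indicator (I n)))"
        using sets_N N_I_fin by (intro finite_borel_measure_restricted) auto
      show "emeasure (density M (indicator (I n))) {a<..b} \<le> emeasure (density N (indicator (I n))) {a<..b}"
        for a b using le_I[of n a b] by (simp add: M_I N_I)
    qed
    then show ?thesis
      using A by (simp add: M_I N_I)
  qed
  then show ?thesis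
    unfolding emeasure_eq_SUP_Ioc_Int[OF sets_M A] emeasure_eq_SUP_Ioc_Int[OF sets_N A] I_def
    by (intro SUP_mono) blast
qed

lemma is_density_exists:
  fixes M :: "real measure"
  assumes sets_M: "sets M = sets borel" and fin: "emeasure M UNIV < \<infinity>"
    and ac: "\<And>A. A \<in> sets borel \<Longrightarrow> emeasure lborel A = 0 \<Longrightarrow> emeasure M A = 0"
  shows "\<exists>g. is_density M g"
proof -
  have "absolutely_continuous lborel M"
    unfolding absolutely_continuous_def using ac sets_M by (auto simp: null_sets_def)
  from sigma_finite_measure.Radon_Nikodym[OF sigma_finite_lborel this] sets_M obtain h
    where h: "h \<in> borel_measurable lborel" and M: "density lborel h = M" by auto
  have "(\<integral>\<^sup>+x. h x \<partial>lborel) \<noteq> \<infinity>"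
    using fin M[symmetric] h by (simp add: emeasure_density)
  then have "AE x in lborel. h x \<noteq> \<infinity>"
    using h by (rule nn_integral_noteq_infinite[rotated])
  then have "density lborel (\<lambda>x. ennreal (enn2real (h x))) = M"
    unfolding M[symmetric] using h by (intro density_cong) (auto simp: less_top)
  then have "is_density M (\<lambda>x. enn2real (h x))"
    unfolding is_density_def using h by simp
  then show ?thesis by blast
qed

lemma AE_le_of_set_nn_integral_le:
  fixes g h :: "real \<Rightarrow> real"
  assumes g: "g \<in> borel_measurable borel" and h: "h \<in> borel_measurable borel"
    and h_nonneg: "\<And>x. 0 \<le> h x"
    and le: "\<And>A. A \<in> sets borel \<Longrightarrow>
      (\<integral>\<^sup>+x. ennreal (g x) * indicator A x \<partial>lborel) \<le> (\<integral>\<^sup>+x. ennreal (h x) * indicator A x \<partial>lborel)"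
    and fin: "(\<integral>\<^sup>+x. ennreal (h x) \<partial>lborel) < \<infinity>"
  shows "AE x in lborel. g x \<le> h x"
proof -
  define A where "A = {x. h x < g x}"
  have A: "A \<in> sets borel" unfolding A_def using g h by simp
  define X where "X = (\<integral>\<^sup>+x. ennreal (h x) * indicator A x \<partial>lborel)"
  have "X \<le> (\<integral>\<^sup>+x. ennreal (h x) \<partial>lborel)" unfolding X_def
    by (intro nn_integral_mono) (simp add: indicator_def)
  then have X_fin: "X < \<infinity>" using fin by simp
  have "ennreal (g x) * indicator A x = ennreal (g x - h x) * indicator A x + ennreal (h x) * indicator A x" for x
    using h_nonneg[of x] by (cases "x \<in> A") (simp_all add: A_def flip: ennreal_plus)
  then have "(\<integral>\<^sup>+x. ennreal (g x) * indicator A x \<partial>lborel) =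
     (\<integral>\<^sup>+x. ennreal (g x - h x) * indicator A x \<partial>lborel) + X"
    unfolding X_def using g h A by (simp add: nn_integral_add)
  then have "X + (\<integral>\<^sup>+x. ennreal (g x - h x) * indicator A x \<partial>lborel) \<le> X + 0"
    using le[OF A] by (simp add: X_def add.commute)
  then have "(\<integral>\<^sup>+x. ennreal (g x - h x) * indicator A x \<partial>lborel) = 0"
    unfolding ennreal_add_left_cancel_le using X_fin by auto
  then have "AE x in lborel. ennreal (g x - h x) * indicator A x = 0"
    by (subst (asm) nn_integral_0_iff_AE) (use g h A in simp_all)
  then show ?thesis
    by eventually_elim (auto simp: indicator_def A_def ennreal_eq_0_iff split: if_splits)
qed

section \<open>Weighted medians and quantiles\<close>

lemma sum_weights_mono:
  fixes lam :: "nat \<Rightarrow> real"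
  assumes "\<forall>i<N. 0 \<le> lam i" and "\<And>i. i < N \<Longrightarrow> P i \<Longrightarrow> Q i"
  shows "(\<Sum>i\<in>{i\<in>{..<N}. P i}. lam i) \<le> (\<Sum>i\<in>{i\<in>{..<N}. Q i}. lam i)"
  using assms by (intro sum_mono2) auto

lemma sum_weights_eq_total:
  fixes lam :: "nat \<Rightarrow> real"
  assumes "\<And>i. i < N \<Longrightarrow> P i"
  shows "(\<Sum>i\<in>{i\<in>{..<N}. P i}. lam i) = (\<Sum>i<N. lam i)"
  using assms by (intro sum.cong) auto

lemma sum_weights_nonempty:
  fixes lam :: "nat \<Rightarrow> real"
  assumes "0 < (\<Sum>i\<in>{i\<in>{..<N}. P i}. lam i)"
  obtains i where "i < N" "P i"
proof -
  have "{i\<in>{..<N}. P i} \<noteq> {}"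
  proof
    assume "{i\<in>{..<N}. P i} = {}"
    then show False using assms by (simp only: sum.empty less_irrefl)
  qed
  then show ?thesis using that by blast
qed

lemma obtain_gap_above:
  fixes xs :: "nat \<Rightarrow> real"
  obtains y1 where "x < y1" and "\<And>i y. i < N \<Longrightarrow> xs i \<le> y \<Longrightarrow> y < y1 \<Longrightarrow> xs i \<le> x"
proof
  define Y where "Y = insert (x + 1) {xs i |i. i < N \<and> x < xs i}"
  have Y: "finite Y" "Y \<noteq> {}"
    by (simp_all add: Y_def)
  show "x < Min Y"
    using Y by (auto simp: Y_def)
  show "xs i \<le> x" if "i < N" "xs i \<le> y" "y < Min Y" for i y
  proof (rule ccontr)
    assume "\<not> xs i \<le> x"
    then have "Min Y \<le> xs i"
      using Y that(1) by (intro Min_le) (auto simp: Y_def)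
    then show False using that by simp
  qed
qed

context
  fixes N :: nat and lam xs :: "nat \<Rightarrow> real"
  assumes lam_nonneg: "\<forall>i<N. 0 \<le> lam i" and lam_sum: "(\<Sum>i<N. lam i) = 1"
begin

lemma med_minus_le_iff:
  "med_minus N lam xs \<le> x \<longleftrightarrow> 1/2 \<le> (\<Sum>i\<in>{i\<in>{..<N}. xs i \<le> x}. lam i)"
proof -
  define \<sigma> where "\<sigma> y = (\<Sum>i\<in>{i\<in>{..<N}. xs i \<le> y}. lam i)" for y
  define S where "S = {y. 1/2 \<le> \<sigma> y}"
  have med: "med_minus N lam xs = Inf S"
    by (simp add: med_minus_def S_def \<sigma>_def)
  have "\<sigma> (Max (xs ` {..<N})) = 1"
    unfolding \<sigma>_def using lam_sum by (subst sum_weights_eq_total) auto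
  then have S_ne: "S \<noteq> {}"
    by (auto simp: S_def intro!: exI[of _ "Max (xs ` {..<N})"])
  have "Min (xs ` {..<N}) \<le> y" if y: "y \<in> S" for y
  proof -
    have "0 < \<sigma> y"
      using y by (simp add: S_def)
    then obtain i where "i < N" "xs i \<le> y"
      unfolding \<sigma>_def by (rule sum_weights_nonempty)
    then show ?thesis by (meson Min_le finite_imageI finite_lessThan image_eqI lessThan_iff order_trans)
  qed
  then have S_bdd: "bdd_below S"
    by (rule bdd_belowI)
  have "med_minus N lam xs \<le> x \<longleftrightarrow> 1/2 \<le> \<sigma> x"
  proof
    assume le: "med_minus N lam xs \<le> x"
    show "1/2 \<le> \<sigma> x"
    proof (rule ccontr)
      assume less: "\<not> 1/2 \<le> \<sigma> x"
      obtain y1 where y1: "x < y1" "\<And>i y. i < N \<Longrightarrow> xs i \<le> y \<Longrightarrow> y < y1 \<Longrightarrow> xs i \<le> x"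
        using obtain_gap_above[where x = x and N = N and xs = xs] by blast
      have "y1 \<le> y" if "y \<in> S" for y
      proof (rule ccontr)
        assume "\<not> y1 \<le> y"
        then have "\<sigma> y \<le> \<sigma> x"
          unfolding \<sigma>_def using lam_nonneg y1(2) by (intro sum_weights_mono) auto
        then show False using that less by (simp add: S_def)
      qed
      then have "y1 \<le> Inf S"
        using S_ne by (intro cInf_greatest) auto
      then show False using le med y1(1) by simp
    qed
  next
    assume "1/2 \<le> \<sigma> x"
    then show "med_minus N lam xs \<le> x"
      unfolding med using S_bdd by (intro cInf_lower) (simp_all add: S_def)
  qed
  then show ?thesis unfolding \<sigma>_def .
qed

lemma med_plus_le_iff:
  "med_plus N lam xs \<le> x \<longleftrightarrow> 1/2 < (\<Sum>i\<in>{i\<in>{..<N}. xs i \<le> x}. lam i)"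
proof -
  define \<sigma> where "\<sigma> y = (\<Sum>i\<in>{i\<in>{..<N}. xs i \<le> y}. lam i)" for y
  define \<sigma>' where "\<sigma>' y = (\<Sum>i\<in>{i\<in>{..<N}. xs i < y}. lam i)" for y
  define S where "S = {y. \<sigma>' y \<le> 1/2}"
  have med: "med_plus N lam xs = Sup S"
    by (simp add: med_plus_def S_def \<sigma>'_def)
  have "Min (xs ` {..<N}) \<le> xs i" if "i < N" for i
    using that by (intro Min_le) auto
  then have "\<sigma>' (Min (xs ` {..<N})) = 0"
    unfolding \<sigma>'_def by (intro sum.neutral) (auto simp: not_less[symmetric])
  then have S_ne: "S \<noteq> {}"
    by (auto simp: S_def intro!: exI[of _ "Min (xs ` {..<N})"])
  have Max_ge_xs: "xs i \<le> Max (xs ` {..<N})" if "i < N" for i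
    using that by (intro Max_ge) auto
  have "y \<le> Max (xs ` {..<N})" if "y \<in> S" for y
  proof (rule ccontr)
    assume "\<not> y \<le> Max (xs ` {..<N})"
    then have "\<sigma>' y = 1"
      unfolding \<sigma>'_def using lam_sum by (subst sum_weights_eq_total) (auto dest!: Max_ge_xs)
    then show False using that by (simp add: S_def)
  qed
  then have S_bdd: "bdd_above S"
    by (rule bdd_aboveI)
  have "med_plus N lam xs \<le> x \<longleftrightarrow> 1/2 < \<sigma> x"
  proof
    assume le: "med_plus N lam xs \<le> x"
    show "1/2 < \<sigma> x"
    proof (rule ccontr)
      assume less: "\<not> 1/2 < \<sigma> x"
      obtain y1 where y1: "x < y1" "\<And>i y. i < N \<Longrightarrow> xs i \<le> y \<Longrightarrow> y < y1 \<Longrightarrow> xs i \<le> x"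
        using obtain_gap_above[where x = x and N = N and xs = xs] by blast
      have "\<sigma>' y1 \<le> \<sigma> x"
        unfolding \<sigma>_def \<sigma>'_def using lam_nonneg y1(2) by (intro sum_weights_mono) auto
      then have "y1 \<le> Sup S"
        using less S_bdd by (intro cSup_upper) (simp_all add: S_def)
      then show False using le med y1(1) by simp
    qed
  next
    assume greater: "1/2 < \<sigma> x"
    have "y \<le> x" if "y \<in> S" for y
    proof (rule ccontr)
      assume "\<not> y \<le> x"
      then have "\<sigma> x \<le> \<sigma>' y"
        unfolding \<sigma>_def \<sigma>'_def using lam_nonneg by (intro sum_weights_mono) auto
      then show False using that greater by (simp add: S_def)
    qed
    then show "med_plus N lam xs \<le> x"
      unfolding med using S_ne by (intro cSup_least) auto
  qed
  then show ?thesis unfolding \<sigma>_def .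
qed

end

lemma (in real_distribution) quantile_le_iff:
  assumes "0 < t" "t < 1"
  shows "quantile M t \<le> x \<longleftrightarrow> t \<le> cdf M x"
proof -
  interpret cdf_distribution M ..
  show ?thesis
    unfolding quantile_def by (rule pseudoinverse[OF assms, symmetric])
qed

lemma down_closed_interval:
  fixes D :: "real set"
  assumes sub: "D \<subseteq> {0<..<1}" and down: "\<forall>t\<in>D. \<forall>s. 0 < s \<and> s \<le> t \<longrightarrow> s \<in> D"
  obtains \<tau> where "0 \<le> \<tau>" "\<tau> \<le> 1" "{0<..<\<tau>} \<subseteq> D" "D \<subseteq> {0<..\<tau>}"
proof
  define \<tau> where "\<tau> = Sup (insert 0 D)"
  have bdd: "bdd_above (insert 0 D)"
    using sub by (intro bdd_aboveI[of _ 1]) auto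
  show "0 \<le> \<tau>"
    unfolding \<tau>_def using bdd by (intro cSup_upper) auto
  show "D \<subseteq> {0<..\<tau>}"
  proof
    fix t assume "t \<in> D"
    then show "t \<in> {0<..\<tau>}"
      unfolding \<tau>_def using sub bdd by (auto intro: cSup_upper)
  qed
  show "\<tau> \<le> 1"
    unfolding \<tau>_def using sub by (intro cSup_least) auto
  show "{0<..<\<tau>} \<subseteq> D"
  proof
    fix s assume s: "s \<in> {0<..<\<tau>}"
    then obtain t where "t \<in> insert 0 D" "s < t"
      unfolding \<tau>_def using less_cSupE[of s "insert 0 D"] by auto
    then show "s \<in> D" using s down by auto
  qed
qed

lemma down_closed_measure:
  fixes D :: "real set"
  assumes sub: "D \<subseteq> {0<..<1}" and down: "\<forall>t\<in>D. \<forall>s. 0 < s \<and> s \<le> t \<longrightarrow> s \<in> D"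
  shows "D \<in> fmeasurable lborel" and "measure lborel D \<le> 1"
    and "\<And>t. t \<in> D \<Longrightarrow> t \<le> measure lborel D"
    and "\<And>s. 0 < s \<Longrightarrow> s < measure lborel D \<Longrightarrow> s \<in> D"
proof -
  obtain \<tau> where \<tau>: "0 \<le> \<tau>" "\<tau> \<le> 1" "{0<..<\<tau>} \<subseteq> D" "D \<subseteq> {0<..\<tau>}"
    by (rule down_closed_interval[OF sub down])
  have null: "D \<inter> {\<tau>} \<in> null_sets lborel"
    by (rule finite_imp_null_set_lborel) simp
  have D_eq: "D = {0<..<\<tau>} \<union> (D \<inter> {\<tau>})"
    using \<tau> by auto
  also have "\<dots> \<in> sets lborel"
    using null_setsD2[OF null] by (intro sets.Un) simp_all
  finally have D_sets: "D \<in> sets lborel" .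
  have "emeasure lborel D = emeasure lborel {0<..<\<tau>}"
    using null by (subst D_eq) (rule emeasure_Un_null_set; simp)
  also have "\<dots> = ennreal \<tau>"
    using \<tau>(1) by simp
  finally have "emeasure lborel D = ennreal \<tau>" .
  then have "D \<in> fmeasurable lborel" and "measure lborel D = \<tau>"
    using D_sets \<tau>(1) by (auto simp: fmeasurable_def measure_def)
  then show "D \<in> fmeasurable lborel" and "measure lborel D \<le> 1"
    and "\<And>t. t \<in> D \<Longrightarrow> t \<le> measure lborel D"
    and "\<And>s. 0 < s \<Longrightarrow> s < measure lborel D \<Longrightarrow> s \<in> D"
    using \<tau> by auto
qed

lemma cSup_diff_cInf_le:
  fixes S :: "real set"
  assumes "S \<noteq> {}" and "\<And>x x'. x \<in> S \<Longrightarrow> x' \<in> S \<Longrightarrow> x - x' \<le> c"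
  shows "Sup S - Inf S \<le> c"
proof -
  have "Sup S - c \<le> x'" if "x' \<in> S" for x'
    using assms that by (subst diff_le_eq, subst add.commute) (intro cSup_least; force)
  then have "Sup S - c \<le> Inf S"
    using assms(1) by (intro cInf_greatest) auto
  then show ?thesis by simp
qed

lemma weighted_oscillation_le:
  fixes S0 S1 :: "real set"
  assumes ne: "S0 \<noteq> {}" "S1 \<noteq> {}" and c: "0 < c0" "0 < c1"
    and K: "\<And>x x' y y'. x \<in> S0 \<Longrightarrow> x' \<in> S0 \<Longrightarrow> y \<in> S1 \<Longrightarrow> y' \<in> S1 \<Longrightarrow>
      c0 * (x - x') + c1 * (y - y') \<le> K"
  shows "bdd_above S0" "bdd_below S0" "bdd_above S1" "bdd_below S1"
    "c0 * (Sup S0 - Inf S0) + c1 * (Sup S1 - Inf S1) \<le> K"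
proof -
  obtain x0 y0 where x0: "x0 \<in> S0" and y0: "y0 \<in> S1"
    using ne by blast
  have osc0: "c0 * (x - x') \<le> K" if "x \<in> S0" "x' \<in> S0" for x x'
    using K[OF that y0 y0] by simp
  have "x \<le> x0 + K / c0 \<and> x0 - K / c0 \<le> x" if "x \<in> S0" for x
    using osc0[OF that x0] osc0[OF x0 that] c by (simp add: field_simps)
  then show S0: "bdd_above S0" "bdd_below S0"
    unfolding bdd_above_def bdd_below_def by blast+
  have osc1: "c1 * (y - y') \<le> K" if "y \<in> S1" "y' \<in> S1" for y y'
    using K[OF x0 x0 that] by simp
  have "y \<le> y0 + K / c1 \<and> y0 - K / c1 \<le> y" if "y \<in> S1" for y
    using osc1[OF that y0] osc1[OF y0 that] c by (simp add: field_simps)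
  then show S1: "bdd_above S1" "bdd_below S1"
    unfolding bdd_above_def bdd_below_def by blast+
  have "y - y' \<le> (K - c0 * (Sup S0 - Inf S0)) / c1" if "y \<in> S1" "y' \<in> S1" for y y'
  proof -
    have "x - x' \<le> (K - c1 * (y - y')) / c0" if "x \<in> S0" "x' \<in> S0" for x x'
      using K[OF that \<open>y \<in> S1\<close> \<open>y' \<in> S1\<close>] c by (simp add: field_simps)
    then have "Sup S0 - Inf S0 \<le> (K - c1 * (y - y')) / c0"
      by (rule cSup_diff_cInf_le[OF ne(1)])
    then show ?thesis using c by (simp add: field_simps)
  qed
  then have "Sup S1 - Inf S1 \<le> (K - c0 * (Sup S0 - Inf S0)) / c1"
    by (rule cSup_diff_cInf_le[OF ne(2)])
  then show "c0 * (Sup S0 - Inf S0) + c1 * (Sup S1 - Inf S1) \<le> K"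
    using c by (simp add: field_simps)
qed

lemma obtain_arg_min_lessThan:
  fixes g :: "nat \<Rightarrow> 'a::linorder"
  assumes "0 < N"
  obtains j where "j < N" "\<And>i. i < N \<Longrightarrow> g j \<le> g i"
  using ex_is_arg_min_if_finite[of "{..<N}" g] assms that by (auto simp: is_arg_min_linorder)

lemma obtain_arg_max_lessThan:
  fixes g :: "nat \<Rightarrow> 'a::linorder"
  assumes "0 < N"
  obtains j where "j < N" "\<And>i. i < N \<Longrightarrow> g i \<le> g j"
proof -
  have "Max (g ` {..<N}) \<in> g ` {..<N}"
    using assms by (intro Max_in) auto
  then obtain j where "j < N" "g j = Max (g ` {..<N})"
    by auto
  then show ?thesis
    using that by (metis Max_ge finite_imageI finite_lessThan imageI lessThan_iff)
qed

lemma measure_le_Sup_minus_Inf: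
  fixes A S :: "real set"
  assumes "A \<subseteq> S" "S \<noteq> {}" "bdd_above S" "bdd_below S" "A \<in> sets lborel"
  shows "A \<in> fmeasurable lborel" and "measure lborel A \<le> Sup S - Inf S"
proof -
  have sub: "A \<subseteq> {Inf S..Sup S}"
    using assms(1,3,4) by (auto intro!: cInf_lower cSup_upper)
  have Icc: "{Inf S..Sup S} \<in> fmeasurable lborel"
    using cInf_le_cSup[OF assms(2-4)] by (simp add: fmeasurable_def)
  show "A \<in> fmeasurable lborel"
    using assms(5) by (intro fmeasurableI2[OF Icc sub])
  have "measure lborel A \<le> measure lborel {Inf S..Sup S}"
    using Icc sub assms(5) by (intro measure_mono_fmeasurable) auto
  then show "measure lborel A \<le> Sup S - Inf S"
    using cInf_le_cSup[OF assms(2-4)] by simp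
qed

lemma powr_add_le:
  fixes a b r :: real
  assumes a: "0 \<le> a" and b: "0 \<le> b" and r: "0 < r" "r \<le> 1"
  shows "(a + b) powr r \<le> a powr r + b powr r"
proof (cases "a + b = 0")
  case False
  define s where "s = a + b"
  have s: "0 < s" using False a b by (simp add: s_def)
  have "a / s \<le> (a / s) powr r" "b / s \<le> (b / s) powr r"
    using powr_mono'[OF r(2), of "a / s"] powr_mono'[OF r(2), of "b / s"] a b s
    by (simp_all add: s_def)
  moreover have "a / s + b / s = 1"
    using s by (simp add: s_def add_divide_distrib[symmetric])
  ultimately have "1 \<le> (a / s) powr r + (b / s) powr r" by linarith
  also have "\<dots> = (a powr r + b powr r) / s powr r"
    using a b s by (simp add: powr_divide add_divide_distrib)
  finally show ?thesis using s by (simp add: s_def field_simps)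
qed (use a b in simp)

lemma powr_sum_le:
  fixes a :: "'a \<Rightarrow> real" and r :: real
  assumes "finite I" and "\<And>i. i \<in> I \<Longrightarrow> 0 \<le> a i" and "0 < r" "r \<le> 1"
  shows "(\<Sum>i\<in>I. a i) powr r \<le> (\<Sum>i\<in>I. a i powr r)"
  using assms(1,2)
proof (induction I rule: finite_induct)
  case (insert j I)
  then have "(\<Sum>i\<in>insert j I. a i) powr r \<le> a j powr r + (\<Sum>i\<in>I. a i) powr r"
    using assms(3,4) by (simp add: powr_add_le sum_nonneg)
  also have "\<dots> \<le> (\<Sum>i\<in>insert j I. a i powr r)"
    using insert by simp
  finally show ?case .
qed simp

definition layer_kernel :: "real \<Rightarrow> real \<Rightarrow> ennreal" where
  "layer_kernel p r = ennreal (p * (p - 1) * r powr (p - 2)) * indicator {0<..} r"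

lemma layer_kernel_has_integral:
  fixes p y :: real
  assumes p: "1 < p" and y: "0 \<le> y"
  shows "((\<lambda>r. p * (p - 1) * r powr (p - 2) * (y - r)) has_integral y powr p) {0..y}"
proof -
  define H where "H r = p * y * r powr (p - 1) - (p - 1) * r powr p" for r
  have "continuous_on {0..y} (\<lambda>r. r powr (p - 1))"
    by (rule continuous_on_powr') (use p in \<open>auto intro: continuous_intros\<close>)
  moreover have "continuous_on {0..y} (\<lambda>r. r powr p)"
    by (rule continuous_on_powr') (use p in \<open>auto intro: continuous_intros\<close>)
  ultimately have "continuous_on {0..y} H"
    unfolding H_def by (intro continuous_on_diff continuous_on_mult_left)
  moreover have "(H has_real_derivative p * (p - 1) * r powr (p - 2) * (y - r)) (at r)" if "0 < r" for r
  proof -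
    have "(H has_real_derivative p * y * ((p - 1) * r powr (p - 1 - 1)) - (p - 1) * (p * r powr (p - 1))) (at r)"
      unfolding H_def using that by (intro DERIV_diff DERIV_cmult has_real_derivative_powr)
    moreover have "r powr (p - 1) = r powr (p - 2) * r powr 1"
      unfolding powr_add[symmetric] by simp
    then have "r powr (p - 1) = r powr (p - 2) * r"
      using that by simp
    ultimately show ?thesis by (simp add: algebra_simps)
  qed
  ultimately have "((\<lambda>r. p * (p - 1) * r powr (p - 2) * (y - r)) has_integral H y - H 0) {0..y}"
    using y by (intro fundamental_theorem_of_calculus_interior)
      (auto simp: has_real_derivative_iff_has_vector_derivative[symmetric])
  moreover have "H y - H 0 = y powr p"
    using p y by (cases "y = 0") (simp_all add: H_def powr_mult_base algebra_simps)
  ultimately show ?thesis by simp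
qed

lemma nn_integral_layer_kernel:
  fixes p y :: real
  assumes p: "1 < p" and y: "0 \<le> y"
  shows "(\<integral>\<^sup>+r. layer_kernel p r * ennreal (y - r) \<partial>lborel) = ennreal (y powr p)"
proof -
  have "layer_kernel p r * ennreal (y - r) = ennreal (p * (p - 1) * r powr (p - 2) * (y - r)) * indicator {0..y} r" for r
  proof (cases "0 < r \<and> r \<le> y")
    case True
    then show ?thesis
      using p by (simp add: layer_kernel_def ennreal_mult'[symmetric] mult.assoc)
  next
    case False
    then show ?thesis
      by (cases "0 < r") (auto simp: layer_kernel_def indicator_def ennreal_neg)
  qed
  then have "(\<integral>\<^sup>+r. layer_kernel p r * ennreal (y - r) \<partial>lborel) =
      (\<integral>\<^sup>+r. ennreal (p * (p - 1) * r powr (p - 2) * (y - r)) * indicator {0..y} r \<partial>lborel)"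
    by simp
  also have "\<dots> = ennreal (y powr p)"
    using p by (intro nn_integral_has_integral_lebesgue'[OF _ layer_kernel_has_integral[OF p y]]) auto
  finally show ?thesis .
qed

lemma nn_integral_powr_layer_cake:
  fixes \<phi> :: "'a \<Rightarrow> real"
  assumes "sigma_finite_measure M" and p: "1 < p"
    and [measurable]: "\<phi> \<in> borel_measurable M" and nonneg: "\<And>x. 0 \<le> \<phi> x"
  shows "(\<integral>\<^sup>+x. ennreal (\<phi> x powr p) \<partial>M) = (\<integral>\<^sup>+r. layer_kernel p r * (\<integral>\<^sup>+x. ennreal (\<phi> x - r) \<partial>M) \<partial>lborel)"
proof -
  interpret pair_sigma_finite M lborel
    using assms(1) by (simp add: pair_sigma_finite_def sigma_finite_lborel)
  have [measurable]: "(\<lambda>r. layer_kernel p r) \<in> borel_measurable borel"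
    unfolding layer_kernel_def by measurable
  have "(\<integral>\<^sup>+x. ennreal (\<phi> x powr p) \<partial>M) = (\<integral>\<^sup>+x. (\<integral>\<^sup>+r. layer_kernel p r * ennreal (\<phi> x - r) \<partial>lborel) \<partial>M)"
    using nn_integral_layer_kernel[OF p nonneg] by simp
  also have "\<dots> = (\<integral>\<^sup>+r. (\<integral>\<^sup>+x. layer_kernel p r * ennreal (\<phi> x - r) \<partial>M) \<partial>lborel)"
    by (rule Fubini'[symmetric]) measurable
  also have "\<dots> = (\<integral>\<^sup>+r. layer_kernel p r * (\<integral>\<^sup>+x. ennreal (\<phi> x - r) \<partial>M) \<partial>lborel)"
    by (simp add: nn_integral_cmult)
  finally show ?thesis .
qed

lemma esssup_nonneg:
  fixes f :: "'a \<Rightarrow> ereal"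
  assumes "emeasure M (space M) \<noteq> 0" and "\<And>x. 0 \<le> f x"
  shows "0 \<le> esssup M f"
proof -
  have "0 = esssup M (\<lambda>x. 0)"
    by (rule esssup_const[OF assms(1), symmetric])
  also have "\<dots> \<le> esssup M f"
    using assms(2) by (intro esssup_mono) auto
  finally show ?thesis .
qed

section \<open>\<open>L\<^sup>p\<close> norms of nonnegative functions\<close>

lemma memLp_real_iff:
  assumes "\<And>x. 0 \<le> g x"
  shows "memLp (ereal q) g \<longleftrightarrow> g \<in> borel_measurable borel \<and> integrable lborel (\<lambda>x. g x powr q)"
  using assms by (simp add: memLp_def)

lemma Lp_norm_real:
  assumes "\<And>x. 0 \<le> g x"
  shows "Lp_norm (ereal q) g = (\<integral>x. g x powr q \<partial>lborel) powr (1 / q)"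
  using assms by (simp add: Lp_norm_def)

context
  fixes f :: "nat \<Rightarrow> real \<Rightarrow> real" and N :: nat
  assumes N: "0 < N"
    and f_measurable[measurable]: "\<And>i. i < N \<Longrightarrow> f i \<in> borel_measurable borel"
    and f_nonneg: "\<And>i x. i < N \<Longrightarrow> 0 \<le> f i x"
begin

private lemma Max_attained: obtains j where "j < N" "Max ((\<lambda>i. f i x) ` {..<N}) = f j x"
proof -
  have "Max ((\<lambda>i. f i x) ` {..<N}) \<in> (\<lambda>i. f i x) ` {..<N}"
    using N by (intro Max_in) auto
  then show ?thesis using that by auto
qed

private lemma Max_nonneg: "0 \<le> Max ((\<lambda>i. f i x) ` {..<N})"
  using Max_attained[of x] f_nonneg by metis

lemma Lp_norm_Max_le_sum_real:
  assumes q: "1 \<le> q" and Lp: "\<And>i. i < N \<Longrightarrow> memLp (ereal q) (f i)"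
  shows "memLp (ereal q) (\<lambda>x. Max ((\<lambda>i. f i x) ` {..<N}))"
    and "Lp_norm (ereal q) (\<lambda>x. Max ((\<lambda>i. f i x) ` {..<N})) \<le> (\<Sum>i<N. Lp_norm (ereal q) (f i))"
proof -
  define M where "M x = Max ((\<lambda>i. f i x) ` {..<N})" for x
  have M_measurable[measurable]: "M \<in> borel_measurable borel"
    unfolding M_def[abs_def] by (rule borel_measurable_Max) auto
  have int_f: "integrable lborel (\<lambda>x. f i x powr q)" if "i < N" for i
    using Lp[OF that] f_nonneg[OF that] by (simp add: memLp_real_iff)
  have M_le: "M x powr q \<le> (\<Sum>i<N. f i x powr q)" for x
  proof -
    obtain j where j: "j < N" "M x = f j x"
      unfolding M_def by (rule Max_attained)
    have "f j x powr q \<le> (\<Sum>i<N. f i x powr q)"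
      using j(1) by (intro member_le_sum) auto
    then show ?thesis using j(2) by simp
  qed
  have int_sum: "integrable lborel (\<lambda>x. \<Sum>i<N. f i x powr q)"
    using int_f by (intro Bochner_Integration.integrable_sum) auto
  have int_M: "integrable lborel (\<lambda>x. M x powr q)"
    by (rule Bochner_Integration.integrable_bound[OF int_sum]) (simp_all add: order_trans[OF M_le abs_ge_self])
  then show "memLp (ereal q) (\<lambda>x. Max ((\<lambda>i. f i x) ` {..<N}))"
    using Max_nonneg by (simp add: memLp_real_iff M_def[symmetric])
  have "(\<integral>x. M x powr q \<partial>lborel) \<le> (\<integral>x. (\<Sum>i<N. f i x powr q) \<partial>lborel)"
    by (rule integral_mono[OF int_M int_sum M_le])
  also have "\<dots> = (\<Sum>i<N. \<integral>x. f i x powr q \<partial>lborel)"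
    using int_f by (intro Bochner_Integration.integral_sum) auto
  finally have "(\<integral>x. M x powr q \<partial>lborel) powr (1 / q) \<le> (\<Sum>i<N. \<integral>x. f i x powr q \<partial>lborel) powr (1 / q)"
    using q by (intro powr_mono2) auto
  also have "\<dots> \<le> (\<Sum>i<N. (\<integral>x. f i x powr q \<partial>lborel) powr (1 / q))"
    using q by (intro powr_sum_le) auto
  finally show "Lp_norm (ereal q) (\<lambda>x. Max ((\<lambda>i. f i x) ` {..<N})) \<le> (\<Sum>i<N. Lp_norm (ereal q) (f i))"
    using Max_nonneg f_nonneg by (simp add: Lp_norm_real M_def[symmetric])
qed

lemma Lp_norm_Max_le_sum_infinity:
  assumes Linf: "\<And>i. i < N \<Longrightarrow> memLp \<infinity> (f i)"
  shows "memLp \<infinity> (\<lambda>x. Max ((\<lambda>i. f i x) ` {..<N}))"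
    and "Lp_norm \<infinity> (\<lambda>x. Max ((\<lambda>i. f i x) ` {..<N})) \<le> (\<Sum>i<N. Lp_norm \<infinity> (f i))"
proof -
  define M where "M x = Max ((\<lambda>i. f i x) ` {..<N})" for x
  have M_measurable[measurable]: "M \<in> borel_measurable borel"
    unfolding M_def[abs_def] by (rule borel_measurable_Max) auto
  define E where "E i = esssup lborel (\<lambda>x. ereal \<bar>f i x\<bar>)" for i
  have E_real: "E i = ereal (Lp_norm \<infinity> (f i))" if "i < N" for i
  proof -
    have "E i < \<infinity>" "0 \<le> E i"
      using Linf[OF that] by (auto simp: memLp_def E_def intro: esssup_nonneg)
    then show ?thesis by (cases "E i") (auto simp: Lp_norm_def E_def)
  qed
  have "AE x in lborel. \<forall>i\<in>{..<N}. ereal \<bar>f i x\<bar> \<le> E i"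
    by (rule AE_finite_allI) (auto simp: E_def intro: esssup_AE)
  then have "AE x in lborel. ereal \<bar>M x\<bar> \<le> ereal (\<Sum>i<N. Lp_norm \<infinity> (f i))"
  proof eventually_elim
    fix x assume bound: "\<forall>i\<in>{..<N}. ereal \<bar>f i x\<bar> \<le> E i"
    obtain j where "j < N" "M x = f j x"
      unfolding M_def by (rule Max_attained)
    moreover have "Lp_norm \<infinity> (f i) \<ge> 0" if "i < N" for i
      using E_real[OF that] esssup_nonneg[of lborel "\<lambda>x. ereal \<bar>f i x\<bar>"] by (simp add: E_def)
    ultimately have "f j x \<le> Lp_norm \<infinity> (f j)" "Lp_norm \<infinity> (f j) \<le> (\<Sum>i<N. Lp_norm \<infinity> (f i))"
      using bound E_real f_nonneg by (auto intro!: member_le_sum)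
    then show "ereal \<bar>M x\<bar> \<le> ereal (\<Sum>i<N. Lp_norm \<infinity> (f i))"
      using \<open>M x = f j x\<close> f_nonneg[OF \<open>j < N\<close>] by simp
  qed
  then have esssup_M: "esssup lborel (\<lambda>x. ereal \<bar>M x\<bar>) \<le> ereal (\<Sum>i<N. Lp_norm \<infinity> (f i))"
    by (intro esssup_I) auto
  then have "esssup lborel (\<lambda>x. ereal \<bar>M x\<bar>) < \<infinity>"
    by (rule le_less_trans) simp
  then show "memLp \<infinity> (\<lambda>x. Max ((\<lambda>i. f i x) ` {..<N}))"
    by (simp add: memLp_def M_def[symmetric])
  have "0 \<le> esssup lborel (\<lambda>x. ereal \<bar>M x\<bar>)"
    by (intro esssup_nonneg) auto
  with esssup_M show "Lp_norm \<infinity> (\<lambda>x. Max ((\<lambda>i. f i x) ` {..<N})) \<le> (\<Sum>i<N. Lp_norm \<infinity> (f i))"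
    by (cases "esssup lborel (\<lambda>x. ereal \<bar>M x\<bar>)") (auto simp: Lp_norm_def M_def[symmetric])
qed

end

lemma Lp_norm_le_of_nn_integral_powr_le:
  fixes g h :: "real \<Rightarrow> real"
  assumes q: "1 \<le> q" and [measurable]: "g \<in> borel_measurable borel"
    and nonneg: "\<And>x. 0 \<le> g x" "\<And>x. 0 \<le> h x"
    and h: "memLp (ereal q) h"
    and le: "(\<integral>\<^sup>+x. ennreal (g x powr q) \<partial>lborel) \<le> (\<integral>\<^sup>+x. ennreal (h x powr q) \<partial>lborel)"
  shows "memLp (ereal q) g" and "Lp_norm (ereal q) g \<le> Lp_norm (ereal q) h"
proof -
  have int_h: "integrable lborel (\<lambda>x. h x powr q)"
    using h nonneg by (simp add: memLp_real_iff)
  have nn_h: "(\<integral>\<^sup>+x. ennreal (h x powr q) \<partial>lborel) = ennreal (\<integral>x. h x powr q \<partial>lborel)"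
    by (rule nn_integral_eq_integral[OF int_h]) simp
  have int_g: "integrable lborel (\<lambda>x. g x powr q)"
    by (rule integrableI_nonneg) (use le nn_h in \<open>auto simp: le_less_trans\<close>)
  then show "memLp (ereal q) g"
    using nonneg by (simp add: memLp_real_iff)
  have "(\<integral>\<^sup>+x. ennreal (g x powr q) \<partial>lborel) = ennreal (\<integral>x. g x powr q \<partial>lborel)"
    by (rule nn_integral_eq_integral[OF int_g]) simp
  then have "(\<integral>x. g x powr q \<partial>lborel) \<le> (\<integral>x. h x powr q \<partial>lborel)"
    using le nn_h by (simp add: ennreal_le_iff integral_nonneg_AE)
  then show "Lp_norm (ereal q) g \<le> Lp_norm (ereal q) h"
    using q nonneg by (simp add: Lp_norm_real powr_mono2 integral_nonneg_AE)
qed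

lemma Lp_norm_infinity_le_of_AE_le:
  fixes g h :: "real \<Rightarrow> real"
  assumes [measurable]: "g \<in> borel_measurable borel" "h \<in> borel_measurable borel"
    and nonneg: "\<And>x. 0 \<le> g x" "\<And>x. 0 \<le> h x"
    and h: "memLp \<infinity> h"
    and le: "\<And>C. 0 \<le> C \<Longrightarrow> AE x in lborel. h x \<le> C \<Longrightarrow> AE x in lborel. g x \<le> C"
  shows "memLp \<infinity> g" and "Lp_norm \<infinity> g \<le> Lp_norm \<infinity> h"
proof -
  define C where "C = Lp_norm \<infinity> h"
  have "0 \<le> esssup lborel (\<lambda>x. ereal \<bar>h x\<bar>)"
    by (intro esssup_nonneg) auto
  then have esssup_h: "esssup lborel (\<lambda>x. ereal \<bar>h x\<bar>) = ereal C" "0 \<le> C"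
    using h by (cases "esssup lborel (\<lambda>x. ereal \<bar>h x\<bar>)"; simp add: memLp_def C_def Lp_norm_def)+
  have "AE x in lborel. ereal \<bar>h x\<bar> \<le> ereal C"
    using esssup_AE[of "\<lambda>x. ereal \<bar>h x\<bar>" lborel] unfolding esssup_h(1) .
  then have "AE x in lborel. h x \<le> C"
    by eventually_elim simp
  then have "AE x in lborel. ereal \<bar>g x\<bar> \<le> ereal C"
    using le[OF esssup_h(2)] nonneg(1) by simp
  then have esssup_g: "esssup lborel (\<lambda>x. ereal \<bar>g x\<bar>) \<le> ereal C"
    by (intro esssup_I) auto
  then have "esssup lborel (\<lambda>x. ereal \<bar>g x\<bar>) < \<infinity>"
    by (rule le_less_trans) simp
  then show "memLp \<infinity> g"
    by (simp add: memLp_def)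
  have "0 \<le> esssup lborel (\<lambda>x. ereal \<bar>g x\<bar>)"
    by (intro esssup_nonneg) auto
  with esssup_g show "Lp_norm \<infinity> g \<le> Lp_norm \<infinity> h"
    by (cases "esssup lborel (\<lambda>x. ereal \<bar>g x\<bar>)") (auto simp: Lp_norm_def esssup_h(1))
qed

section \<open>The distribution of the horizontal median selection\<close>

locale median_selection =
  fixes N :: nat and lam :: "nat \<Rightarrow> real" and \<nu> :: "nat \<Rightarrow> real measure"
  assumes lam_nonneg: "\<forall>i<N. 0 \<le> lam i" and lam_sum: "(\<Sum>i<N. lam i) = 1"
    and nu_prob: "\<forall>i<N. prob_space (\<nu> i) \<and> sets (\<nu> i) = sets borel"
begin

lemma N_pos: "0 < N"
  using lam_sum by (cases N) auto

lemma real_distribution_nu: "i < N \<Longrightarrow> real_distribution (\<nu> i)"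
  using nu_prob by (auto simp: real_distribution_def real_distribution_axioms_def)

abbreviation F :: "nat \<Rightarrow> real \<Rightarrow> real" where
  "F i \<equiv> cdf (\<nu> i)"

lemma F_mono: "i < N \<Longrightarrow> x \<le> y \<Longrightarrow> F i x \<le> F i y"
  using real_distribution_nu
  by (simp add: finite_borel_measure.cdf_nondecreasing real_distribution.finite_borel_measure_M)

lemma F_nonneg: "0 \<le> F i x"
  by (simp add: cdf_def)

lemma F_le_1: "i < N \<Longrightarrow> F i x \<le> 1"
  using real_distribution_nu by (simp add: real_distribution.cdf_bounded_prob)

lemma emeasure_nu_Ioc: "i < N \<Longrightarrow> a \<le> b \<Longrightarrow> emeasure (\<nu> i) {a<..b} = ennreal (F i b - F i a)"
  using real_distribution_nu
  by (simp add: finite_borel_measure.emeasure_Ioc real_distribution.finite_borel_measure_M)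

definition mass :: "real \<Rightarrow> real \<Rightarrow> real" where
  "mass t x = (\<Sum>i\<in>{i\<in>{..<N}. t \<le> F i x}. lam i)"

lemma mass_antimono: "s \<le> t \<Longrightarrow> mass t x \<le> mass s x"
  unfolding mass_def using lam_nonneg by (intro sum_weights_mono) auto

lemma mass_mono: "x \<le> y \<Longrightarrow> mass t x \<le> mass t y"
  unfolding mass_def using lam_nonneg F_mono by (intro sum_weights_mono) (auto intro: order_trans)

lemma mass_eq_1: "(\<And>i. i < N \<Longrightarrow> t \<le> F i x) \<Longrightarrow> mass t x = 1"
  unfolding mass_def using lam_sum by (subst sum_weights_eq_total) auto

definition Qm :: "real \<Rightarrow> real" where
  "Qm t = med_minus N lam (\<lambda>i. quantile (\<nu> i) t)"

definition Qp :: "real \<Rightarrow> real" where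
  "Qp t = med_plus N lam (\<lambda>i. quantile (\<nu> i) t)"

abbreviation Qt :: "real \<Rightarrow> real \<Rightarrow> real" where
  "Qt \<theta> \<equiv> Q_theta N lam \<theta> \<nu>"

abbreviation HM :: "real \<Rightarrow> real measure" where
  "HM \<theta> \<equiv> HMed N lam \<theta> \<nu>"

lemma quantile_nu_le_iff:
  "0 < t \<Longrightarrow> t < 1 \<Longrightarrow> {i\<in>{..<N}. quantile (\<nu> i) t \<le> x} = {i\<in>{..<N}. t \<le> F i x}"
  using real_distribution_nu by (auto simp: real_distribution.quantile_le_iff)

lemma Qm_le_iff: "0 < t \<Longrightarrow> t < 1 \<Longrightarrow> Qm t \<le> x \<longleftrightarrow> 1/2 \<le> mass t x"
  unfolding Qm_def mass_def med_minus_le_iff[OF lam_nonneg lam_sum] by (subst quantile_nu_le_iff) auto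

lemma Qp_le_iff: "0 < t \<Longrightarrow> t < 1 \<Longrightarrow> Qp t \<le> x \<longleftrightarrow> 1/2 < mass t x"
  unfolding Qp_def mass_def med_plus_le_iff[OF lam_nonneg lam_sum] by (subst quantile_nu_le_iff) auto

lemma Qt_eq: "0 < t \<Longrightarrow> t < 1 \<Longrightarrow> Qt \<theta> t = (1 - \<theta>) * Qm t + \<theta> * Qp t"
  by (simp add: Q_theta_def Qm_def Qp_def)

lemma Qt_convex_comb: "0 < t \<Longrightarrow> t < 1 \<Longrightarrow> Qt \<theta> t = (1 - \<theta>) * Qt 0 t + \<theta> * Qt 1 t"
  by (simp add: Qt_eq)

lemma Qm_mono_on: "mono_on {0<..<1} Qm"
  by (intro mono_onI) (meson Qm_le_iff greaterThanLessThan_iff mass_antimono order.trans order_refl)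

lemma Qp_mono_on: "mono_on {0<..<1} Qp"
  by (intro mono_onI) (meson Qp_le_iff greaterThanLessThan_iff mass_antimono less_le_trans order_refl)

lemma Qt_mono:
  assumes "0 \<le> \<theta>" "\<theta> \<le> 1" "0 < s" "s \<le> t" "t < 1"
  shows "Qt \<theta> s \<le> Qt \<theta> t"
proof -
  have "Qm s \<le> Qm t" "Qp s \<le> Qp t"
    using assms by (auto intro: mono_onD[OF Qm_mono_on] mono_onD[OF Qp_mono_on])
  then show ?thesis
    using assms by (simp add: Qt_eq add_mono mult_left_mono)
qed

lemma Qt_measurable[measurable]: "Qt \<theta> \<in> borel_measurable borel"
proof -
  have extend: "(\<lambda>t. if t \<in> {0<..<1} then Q t else 0) \<in> borel_measurable borel"
    if "mono_on {0<..<1} Q" for Q :: "real \<Rightarrow> real"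
    using borel_measurable_mono_on_fnc[OF that] by (subst measurable_restrict_space_iff[symmetric]) auto
  have "Qt \<theta> = (\<lambda>t. (1 - \<theta>) * (if t \<in> {0<..<1} then Qm t else 0) + \<theta> * (if t \<in> {0<..<1} then Qp t else 0))"
    by (auto simp: Q_theta_def Qm_def Qp_def)
  then show ?thesis
    using extend[OF Qm_mono_on] extend[OF Qp_mono_on] by simp
qed

lemma sets_HMed[simp, measurable_cong]: "sets (HM \<theta>) = sets borel"
  by (simp add: HMed_def)

lemma emeasure_HMed:
  assumes A: "A \<in> sets borel"
  shows "emeasure (HM \<theta>) A = emeasure lborel {t. 0 < t \<and> t < 1 \<and> Qt \<theta> t \<in> A}"
proof -
  have "emeasure (HM \<theta>) A = emeasure lborel (Qt \<theta> -` A \<inter> {0..1})"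
    unfolding HMed_def using A
    by (simp add: emeasure_distr measurable_restrict_space1 space_restrict_space emeasure_restrict_space)
  also have "Qt \<theta> -` A \<inter> {0..1} = {t. 0 < t \<and> t < 1 \<and> Qt \<theta> t \<in> A} \<union> (Qt \<theta> -` A \<inter> {0, 1})"
    by auto
  also have "emeasure lborel \<dots> = emeasure lborel {t. 0 < t \<and> t < 1 \<and> Qt \<theta> t \<in> A}"
  proof (rule emeasure_Un_null_set)
    show "{t. 0 < t \<and> t < 1 \<and> Qt \<theta> t \<in> A} \<in> sets lborel"
      using A by measurable
    show "Qt \<theta> -` A \<inter> {0, 1} \<in> null_sets lborel"
      by (rule finite_imp_null_set_lborel) simp
  qed
  finally show ?thesis .
qed

lemma emeasure_HMed_UNIV: "emeasure (HM \<theta>) UNIV = 1"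
proof -
  have "{t. 0 < t \<and> t < 1} = {0<..<1::real}"
    by auto
  then show ?thesis
    using emeasure_HMed[of UNIV \<theta>] by simp
qed

text \<open>Only \<open>\<theta> \<in> {0, 1}\<close> matter here: \<open>\<theta> = 0\<close> gives the criterion for \<open>Qm t \<le> x\<close>, every other value
  the one for \<open>Qp t \<le> x\<close>.\<close>

definition median_crit :: "real \<Rightarrow> real \<Rightarrow> bool" where
  "median_crit \<theta> v \<longleftrightarrow> (if \<theta> = 0 then 1/2 \<le> v else 1/2 < v)"

definition levels :: "real \<Rightarrow> real \<Rightarrow> real set" where
  "levels \<theta> x = {t. 0 < t \<and> t < 1 \<and> median_crit \<theta> (mass t x)}"

lemma median_crit_mono: "median_crit \<theta> v \<Longrightarrow> v \<le> v' \<Longrightarrow> median_crit \<theta> v'"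
  by (auto simp: median_crit_def split: if_splits)

lemma sublevel_Qt_eq_levels:
  assumes "\<theta> = 0 \<or> \<theta> = 1"
  shows "{t. 0 < t \<and> t < 1 \<and> Qt \<theta> t \<le> x} = levels \<theta> x"
  using assms by (auto simp: levels_def median_crit_def Qt_eq Qm_le_iff Qp_le_iff)

lemma levels_subset: "levels \<theta> x \<subseteq> {0<..<1}"
  by (auto simp: levels_def)

lemma levels_down_closed: "\<forall>t\<in>levels \<theta> x. \<forall>s. 0 < s \<and> s \<le> t \<longrightarrow> s \<in> levels \<theta> x"
  unfolding levels_def using mass_antimono median_crit_mono by fastforce

lemmas measure_levels = down_closed_measure[OF levels_subset levels_down_closed]

lemma levels_sets[measurable]: "levels \<theta> x \<in> sets borel"
  using measure_levels(1)[of \<theta> x] by (simp add: fmeasurable_def)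

lemma levels_mono: "x \<le> y \<Longrightarrow> levels \<theta> x \<subseteq> levels \<theta> y"
  unfolding levels_def using mass_mono median_crit_mono by blast

lemma levels_below_F:
  assumes "t \<in> levels \<theta> x"
  obtains i where "i < N" "t \<le> F i x"
proof -
  have "0 < mass t x"
    using assms by (auto simp: levels_def median_crit_def split: if_splits)
  then show ?thesis
    unfolding mass_def using that by (rule sum_weights_nonempty)
qed

text \<open>The distribution function \<open>x \<mapsto> measure lborel (levels \<theta> x)\<close> of \<open>HM \<theta>\<close> is a weighted median
  of the \<open>F i x\<close>, so its increments are controlled by those of the \<open>F i\<close>.\<close>

lemma measure_levels_increment_ge:
  assumes d: "\<And>i. i < N \<Longrightarrow> F i a + \<delta> \<le> F i b" and "0 \<le> \<delta>"
  shows "measure lborel (levels \<theta> a) + \<delta> \<le> measure lborel (levels \<theta> b)"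
proof -
  define \<tau> where "\<tau> = measure lborel (levels \<theta> a)"
  have in_levels_b: "s \<in> levels \<theta> b" if "0 < s" "s < 1" "s < \<tau> + \<delta>" for s
  proof (cases "s \<le> \<delta>")
    case True
    have "s \<le> F i b" if "i < N" for i
      using d[OF that] F_nonneg[of i a] True by simp
    then have "mass s b = 1"
      by (rule mass_eq_1)
    then show ?thesis using that by (simp add: levels_def median_crit_def)
  next
    case False
    then have "s - \<delta> \<in> levels \<theta> a"
      using that measure_levels(4)[where s = "s - \<delta>" and \<theta> = \<theta> and x = a] by (simp add: \<tau>_def)
    moreover have "s \<le> F i b" if "i < N" "s - \<delta> \<le> F i a" for i
      using d[OF that(1)] that(2) by simp
    then have "mass (s - \<delta>) a \<le> mass s b"
      unfolding mass_def using lam_nonneg by (intro sum_weights_mono)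
    ultimately show ?thesis
      using that median_crit_mono by (auto simp: levels_def)
  qed
  have "\<tau> + \<delta> \<le> 1"
  proof (rule ccontr)
    assume "\<not> \<tau> + \<delta> \<le> 1"
    then obtain s where s: "1 < s" "s < \<tau> + \<delta>"
      using dense[of 1 "\<tau> + \<delta>"] by auto
    have "\<delta> \<le> 1"
      using d[OF N_pos] F_nonneg[of 0 a] F_le_1[OF N_pos, of b] by simp
    then have "s - \<delta> \<in> levels \<theta> a"
      using s measure_levels(4)[where s = "s - \<delta>" and \<theta> = \<theta> and x = a] by (simp add: \<tau>_def)
    then obtain i where "i < N" "s - \<delta> \<le> F i a"
      by (rule levels_below_F)
    then show False using d[of i] F_le_1[of i b] s by simp
  qed
  then have "{0<..<\<tau> + \<delta>} \<subseteq> levels \<theta> b"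
    using in_levels_b by auto
  then have "measure lborel {0<..<\<tau> + \<delta>} \<le> measure lborel (levels \<theta> b)"
    using measure_levels(1) by (intro measure_mono_fmeasurable) auto
  then show ?thesis
    using \<open>0 \<le> \<delta>\<close> by (simp add: \<tau>_def)
qed

lemma measure_levels_increment_le:
  assumes d: "\<And>i. i < N \<Longrightarrow> F i b \<le> F i a + \<Delta>" and "0 \<le> \<Delta>"
  shows "measure lborel (levels \<theta> b) \<le> measure lborel (levels \<theta> a) + \<Delta>"
proof -
  define \<tau> where "\<tau> = measure lborel (levels \<theta> a)"
  have "t \<le> \<tau> + \<Delta>" if t: "t \<in> levels \<theta> b" for t
  proof (cases "t \<le> \<Delta>")
    case False
    have "t - \<Delta> \<le> F i a" if "i < N" "t \<le> F i b" for i
      using d[OF that(1)] that(2) by simp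
    then have "mass t b \<le> mass (t - \<Delta>) a"
      unfolding mass_def using lam_nonneg by (intro sum_weights_mono)
    then have "t - \<Delta> \<in> levels \<theta> a"
      using t False \<open>0 \<le> \<Delta>\<close> median_crit_mono by (auto simp: levels_def)
    then show ?thesis
      using measure_levels(3) by (force simp: \<tau>_def)
  qed (auto simp: \<tau>_def intro: add_increasing)
  then have "levels \<theta> b \<subseteq> {0<..\<tau> + \<Delta>}"
    using levels_subset[of \<theta> b] by auto
  then have "measure lborel (levels \<theta> b) \<le> measure lborel {0<..\<tau> + \<Delta>}"
    using measure_levels(1)[of \<theta> b] \<open>0 \<le> \<Delta>\<close> by (intro measure_mono_fmeasurable) (auto simp: fmeasurable_def \<tau>_def)
  then show ?thesis
    using \<open>0 \<le> \<Delta>\<close> by (simp add: \<tau>_def)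
qed

lemma emeasure_HMed_Ioc:
  assumes \<theta>: "\<theta> = 0 \<or> \<theta> = 1" and "a \<le> b"
  shows "emeasure (HM \<theta>) {a<..b} = ennreal (measure lborel (levels \<theta> b) - measure lborel (levels \<theta> a))"
proof -
  have "{t. 0 < t \<and> t < 1 \<and> Qt \<theta> t \<in> {a<..b}} =
      {t. 0 < t \<and> t < 1 \<and> Qt \<theta> t \<le> b} - {t. 0 < t \<and> t < 1 \<and> Qt \<theta> t \<le> a}"
    by auto
  also have "\<dots> = levels \<theta> b - levels \<theta> a"
    unfolding sublevel_Qt_eq_levels[OF \<theta>] ..
  finally have "emeasure (HM \<theta>) {a<..b} = emeasure lborel (levels \<theta> b - levels \<theta> a)"
    by (simp add: emeasure_HMed)
  also have "\<dots> = ennreal (measure lborel (levels \<theta> b - levels \<theta> a))"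
    using measure_levels(1)[of \<theta> a] measure_levels(1)[of \<theta> b]
    by (intro emeasure_eq_measure2 fmeasurable_Diff) auto
  also have "\<dots> = ennreal (measure lborel (levels \<theta> b) - measure lborel (levels \<theta> a))"
    using measure_levels(1)[of \<theta> a] measure_levels(1)[of \<theta> b] levels_mono[OF \<open>a \<le> b\<close>]
    by (subst measure_Diff) (auto simp: fmeasurable_def)
  finally show ?thesis .
qed

lemma HMed_Ioc_le_nu:
  assumes \<theta>: "\<theta> = 0 \<or> \<theta> = 1" and "a \<le> b"
  obtains j where "j < N" "emeasure (HM \<theta>) {a<..b} \<le> emeasure (\<nu> j) {a<..b}"
proof -
  obtain j where j: "j < N" "\<And>i. i < N \<Longrightarrow> F i b - F i a \<le> F j b - F j a"
    using obtain_arg_max_lessThan[OF N_pos, of "\<lambda>i. F i b - F i a"] by blast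
  have "measure lborel (levels \<theta> b) \<le> measure lborel (levels \<theta> a) + (F j b - F j a)"
    using j F_mono[OF j(1) \<open>a \<le> b\<close>] by (intro measure_levels_increment_le) force+
  then have "emeasure (HM \<theta>) {a<..b} \<le> emeasure (\<nu> j) {a<..b}"
    using \<open>a \<le> b\<close> j(1) by (simp add: emeasure_HMed_Ioc[OF \<theta>] emeasure_nu_Ioc ennreal_leI)
  then show ?thesis using that j(1) by blast
qed

lemma nu_le_HMed_Ioc:
  assumes \<theta>: "\<theta> = 0 \<or> \<theta> = 1" and "a \<le> b"
  obtains j where "j < N" "emeasure (\<nu> j) {a<..b} \<le> emeasure (HM \<theta>) {a<..b}"
proof -
  obtain j where j: "j < N" "\<And>i. i < N \<Longrightarrow> F j b - F j a \<le> F i b - F i a"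
    using obtain_arg_min_lessThan[OF N_pos, of "\<lambda>i. F i b - F i a"] by blast
  have "measure lborel (levels \<theta> a) + (F j b - F j a) \<le> measure lborel (levels \<theta> b)"
    using j F_mono[OF j(1) \<open>a \<le> b\<close>] by (intro measure_levels_increment_ge) force+
  then have "emeasure (\<nu> j) {a<..b} \<le> emeasure (HM \<theta>) {a<..b}"
    using \<open>a \<le> b\<close> j(1) by (simp add: emeasure_HMed_Ioc[OF \<theta>] emeasure_nu_Ioc ennreal_leI)
  then show ?thesis using that j(1) by blast
qed

end

section \<open>Densities of the horizontal median selection\<close>

locale median_selection_density = median_selection +
  fixes f :: "nat \<Rightarrow> real \<Rightarrow> real"
  assumes f_dens: "\<forall>i<N. is_density (\<nu> i) (f i)"
begin

lemma f_measurable[measurable]: "i < N \<Longrightarrow> f i \<in> borel_measurable borel"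
  using f_dens by (auto simp: is_density_def)

lemma f_nonneg: "i < N \<Longrightarrow> 0 \<le> f i x"
  using f_dens by (auto simp: is_density_def)

lemma emeasure_nu: "i < N \<Longrightarrow> A \<in> sets borel \<Longrightarrow> emeasure (\<nu> i) A = (\<integral>\<^sup>+x. ennreal (f i x) * indicator A x \<partial>lborel)"
  using f_dens by (auto simp: is_density_def emeasure_density)

lemma nn_integral_f:
  assumes "i < N"
  shows "(\<integral>\<^sup>+x. ennreal (f i x) \<partial>lborel) = 1"
proof -
  interpret real_distribution "\<nu> i"
    using real_distribution_nu[OF assms] .
  show ?thesis
    using emeasure_nu[OF assms, of UNIV] emeasure_space_1 by simp
qed

definition fmax :: "real \<Rightarrow> real" where
  "fmax x = Max ((\<lambda>i. f i x) ` {..<N})"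

definition fmin :: "real \<Rightarrow> real" where
  "fmin x = Min ((\<lambda>i. f i x) ` {..<N})"

lemma fmax_measurable[measurable]: "fmax \<in> borel_measurable borel"
  unfolding fmax_def[abs_def] by (rule borel_measurable_Max) auto

lemma fmin_measurable[measurable]: "fmin \<in> borel_measurable borel"
  unfolding fmin_def[abs_def] by (rule borel_measurable_Min) auto

lemma f_le_fmax: "i < N \<Longrightarrow> f i x \<le> fmax x"
  unfolding fmax_def by (rule Max_ge) auto

lemma fmin_le_f: "i < N \<Longrightarrow> fmin x \<le> f i x"
  unfolding fmin_def by (rule Min_le) auto

lemma fmax_attained: obtains j where "j < N" "fmax x = f j x"
proof -
  have "fmax x \<in> (\<lambda>i. f i x) ` {..<N}"
    unfolding fmax_def using N_pos by (intro Max_in) auto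
  then show ?thesis using that by auto
qed

lemma fmax_nonneg: "0 \<le> fmax x"
  using f_le_fmax[OF N_pos] f_nonneg[OF N_pos] by (rule order_trans[rotated])

lemma fmax_le_sum: "fmax x \<le> (\<Sum>i<N. f i x)"
proof -
  obtain j where j: "j < N" "fmax x = f j x"
    by (rule fmax_attained)
  have "f j x \<le> (\<Sum>i<N. f i x)"
    using j(1) f_nonneg by (intro member_le_sum) auto
  then show ?thesis using j(2) by simp
qed

lemma nn_integral_fmax_finite: "(\<integral>\<^sup>+x. ennreal (fmax x) \<partial>lborel) < \<infinity>"
proof -
  have "(\<integral>\<^sup>+x. ennreal (fmax x) \<partial>lborel) \<le> (\<integral>\<^sup>+x. (\<Sum>i<N. ennreal (f i x)) \<partial>lborel)"
  proof (intro nn_integral_mono)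
    fix x
    have "ennreal (fmax x) \<le> ennreal (\<Sum>i<N. f i x)"
      by (rule ennreal_leI[OF fmax_le_sum])
    also have "\<dots> = (\<Sum>i<N. ennreal (f i x))"
      by (rule sum_ennreal[symmetric]) (use f_nonneg in auto)
    finally show "ennreal (fmax x) \<le> (\<Sum>i<N. ennreal (f i x))" .
  qed
  also have "\<dots> = (\<Sum>i<N. \<integral>\<^sup>+x. ennreal (f i x) \<partial>lborel)"
    by (rule nn_integral_sum) auto
  also have "\<dots> = of_nat N"
    by (simp add: nn_integral_f)
  finally show ?thesis
    by (simp add: le_less_trans of_nat_less_top)
qed

lemma nu_le_fmax:
  "i < N \<Longrightarrow> A \<in> sets borel \<Longrightarrow> emeasure (\<nu> i) A \<le> emeasure (density lborel fmax) A"
  by (simp add: emeasure_nu emeasure_density, intro nn_integral_mono)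
     (auto simp: indicator_def f_le_fmax intro!: ennreal_leI)

lemma fmin_le_nu:
  "i < N \<Longrightarrow> A \<in> sets borel \<Longrightarrow> emeasure (density lborel fmin) A \<le> emeasure (\<nu> i) A"
  by (simp add: emeasure_nu emeasure_density, intro nn_integral_mono)
     (auto simp: indicator_def fmin_le_f intro!: ennreal_leI)

lemma HMed_le_fmax:
  assumes \<theta>: "\<theta> = 0 \<or> \<theta> = 1" and A: "A \<in> sets borel"
  shows "emeasure (HM \<theta>) A \<le> emeasure (density lborel fmax) A"
proof (rule emeasure_le_of_Ioc_le[OF _ _ _ _ A])
  fix a b :: real
  have "emeasure (density lborel fmax) {a<..b} \<le> (\<integral>\<^sup>+x. ennreal (fmax x) \<partial>lborel)"
    by (simp add: emeasure_density, intro nn_integral_mono) (auto simp: indicator_def)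
  then show "emeasure (density lborel fmax) {a<..b} < \<infinity>"
    using nn_integral_fmax_finite by (rule le_less_trans)
  assume "a \<le> b"
  then obtain j where "j < N" "emeasure (HM \<theta>) {a<..b} \<le> emeasure (\<nu> j) {a<..b}"
    using HMed_Ioc_le_nu[OF \<theta>] by blast
  then show "emeasure (HM \<theta>) {a<..b} \<le> emeasure (density lborel fmax) {a<..b}"
    using nu_le_fmax[of j "{a<..b}"] by simp
qed simp_all

lemma fmin_le_HMed:
  assumes \<theta>: "\<theta> = 0 \<or> \<theta> = 1" and A: "A \<in> sets borel"
  shows "emeasure (density lborel fmin) A \<le> emeasure (HM \<theta>) A"
proof (rule emeasure_le_of_Ioc_le[OF _ _ _ _ A])
  fix a b :: real
  have "emeasure (HM \<theta>) {a<..b} \<le> emeasure (HM \<theta>) UNIV"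
    by (rule emeasure_mono) auto
  then show "emeasure (HM \<theta>) {a<..b} < \<infinity>"
    by (simp add: emeasure_HMed_UNIV le_less_trans)
  assume "a \<le> b"
  then obtain j where "j < N" "emeasure (\<nu> j) {a<..b} \<le> emeasure (HM \<theta>) {a<..b}"
    using nu_le_HMed_Ioc[OF \<theta>] by blast
  then show "emeasure (density lborel fmin) {a<..b} \<le> emeasure (HM \<theta>) {a<..b}"
    using fmin_le_nu[of j "{a<..b}"] by simp
qed simp_all

lemma is_density_HMedD:
  assumes "is_density (HM \<theta>) g"
  shows "g \<in> borel_measurable borel" and "\<And>x. 0 \<le> g x"
    and "\<And>A. A \<in> sets borel \<Longrightarrow> emeasure (HM \<theta>) A = (\<integral>\<^sup>+x. ennreal (g x) * indicator A x \<partial>lborel)"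
  using assms by (auto simp: is_density_def emeasure_density)

lemma is_density_HMed_bounds:
  assumes \<theta>: "\<theta> = 0 \<or> \<theta> = 1" and g: "is_density (HM \<theta>) g"
  shows "AE x in lborel. fmin x \<le> g x \<and> g x \<le> fmax x"
proof -
  note g_props = is_density_HMedD[OF g]
  have [measurable]: "g \<in> borel_measurable borel"
    by (rule g_props(1))
  have "AE x in lborel. g x \<le> fmax x"
    using HMed_le_fmax[OF \<theta>] fmax_nonneg nn_integral_fmax_finite
    by (intro AE_le_of_set_nn_integral_le) (simp_all add: g_props(3) emeasure_density)
  moreover have "AE x in lborel. fmin x \<le> g x"
  proof (rule AE_le_of_set_nn_integral_le)
    show "(\<integral>\<^sup>+x. ennreal (g x) \<partial>lborel) < \<infinity>"
      using g_props(3)[of UNIV] emeasure_HMed_UNIV[of \<theta>] by simp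
  qed (use fmin_le_HMed[OF \<theta>] g_props(2) in \<open>simp_all add: g_props(3) emeasure_density\<close>)
  ultimately show ?thesis by eventually_elim simp
qed

lemma Qt_strict_mono:
  assumes \<theta>: "\<theta> = 0 \<or> \<theta> = 1" and st: "0 < s" "s < t" "t < 1"
  shows "Qt \<theta> s < Qt \<theta> t"
proof (rule ccontr)
  \<comment> \<open>a flat piece of \<open>Qt \<theta>\<close> would be an atom of \<open>HM \<theta>\<close>, which has the bounded density \<open>fmax\<close>\<close>
  assume "\<not> Qt \<theta> s < Qt \<theta> t"
  moreover have "Qt \<theta> s \<le> Qt \<theta> t"
    using \<theta> st by (intro Qt_mono) auto
  ultimately have eq: "Qt \<theta> s = Qt \<theta> t"
    by simp
  have "{s..t} \<subseteq> {u. 0 < u \<and> u < 1 \<and> Qt \<theta> u \<in> {Qt \<theta> t}}"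
  proof
    fix u assume u: "u \<in> {s..t}"
    have "Qt \<theta> s \<le> Qt \<theta> u" "Qt \<theta> u \<le> Qt \<theta> t"
      using \<theta> st u by (auto intro!: Qt_mono)
    then show "u \<in> {u. 0 < u \<and> u < 1 \<and> Qt \<theta> u \<in> {Qt \<theta> t}}"
      using eq u st by auto
  qed
  then have "ennreal (t - s) \<le> emeasure (HM \<theta>) {Qt \<theta> t}"
    using st emeasure_mono[of "{s..t}" "{u. 0 < u \<and> u < 1 \<and> Qt \<theta> u \<in> {Qt \<theta> t}}" lborel]
    by (simp add: emeasure_HMed)
  also have "\<dots> \<le> emeasure (density lborel fmax) {Qt \<theta> t}"
    by (rule HMed_le_fmax[OF \<theta>]) simp
  also have "\<dots> = 0"
    by (simp add: emeasure_density nn_integral_null_set finite_imp_null_set_lborel)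
  finally show False
    using st by simp
qed

definition Gcdf :: "real \<Rightarrow> real \<Rightarrow> real" where
  "Gcdf \<theta> y = measure lborel (levels \<theta> y)"

lemma Gcdf_mono: "mono (Gcdf \<theta>)"
  unfolding Gcdf_def using measure_levels(1) levels_mono
  by (intro monoI measure_mono_fmeasurable) auto

lemma Gcdf_measurable[measurable]: "Gcdf \<theta> \<in> borel_measurable borel"
  by (rule borel_measurable_mono[OF Gcdf_mono])

lemma Gcdf_Qt:
  assumes \<theta>: "\<theta> = 0 \<or> \<theta> = 1" and t: "0 < t" "t < 1"
  shows "Gcdf \<theta> (Qt \<theta> t) = t"
proof -
  have "u \<le> t" if "0 < u" "u < 1" "Qt \<theta> u \<le> Qt \<theta> t" for u
    using Qt_strict_mono[OF \<theta> t(1), of u] that by (cases "u \<le> t") auto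
  moreover have "Qt \<theta> u \<le> Qt \<theta> t" if "0 < u" "u \<le> t" for u
    using \<theta> t that by (intro Qt_mono) auto
  ultimately have "levels \<theta> (Qt \<theta> t) = {0<..t}"
    unfolding sublevel_Qt_eq_levels[OF \<theta>, symmetric] using t by fastforce
  then show ?thesis
    using t by (simp add: Gcdf_def)
qed

definition Qrange :: "real \<Rightarrow> real set" where
  "Qrange \<theta>\<^sub>0 = {y. 0 < Gcdf \<theta>\<^sub>0 y \<and> Gcdf \<theta>\<^sub>0 y < 1 \<and> Qt \<theta>\<^sub>0 (Gcdf \<theta>\<^sub>0 y) = y}"

definition transport_preimage :: "real \<Rightarrow> real \<Rightarrow> real set \<Rightarrow> real set" where
  "transport_preimage \<theta> \<theta>\<^sub>0 A = {y \<in> Qrange \<theta>\<^sub>0. Qt \<theta> (Gcdf \<theta>\<^sub>0 y) \<in> A}"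

lemma Qrange_sets[measurable]: "Qrange \<theta>\<^sub>0 \<in> sets borel"
  unfolding Qrange_def by measurable

lemma transport_preimage_sets[measurable]:
  assumes [measurable]: "A \<in> sets borel"
  shows "transport_preimage \<theta> \<theta>\<^sub>0 A \<in> sets borel"
  unfolding transport_preimage_def by measurable

text \<open>\<open>Gcdf \<theta>\<^sub>0\<close> inverts the strictly increasing \<open>Qt \<theta>\<^sub>0\<close>, so \<open>HM \<theta>\<close> is the image of \<open>HM \<theta>\<^sub>0\<close>
  under the monotone map \<open>Qt \<theta> \<circ> Gcdf \<theta>\<^sub>0\<close>.\<close>

lemma emeasure_HMed_transport:
  assumes \<theta>\<^sub>0: "\<theta>\<^sub>0 = 0 \<or> \<theta>\<^sub>0 = 1" and A: "A \<in> sets borel"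
  shows "emeasure (HM \<theta>) A = emeasure (HM \<theta>\<^sub>0) (transport_preimage \<theta> \<theta>\<^sub>0 A)"
proof -
  have "{t. 0 < t \<and> t < 1 \<and> Qt \<theta> t \<in> A} = {t. 0 < t \<and> t < 1 \<and> Qt \<theta>\<^sub>0 t \<in> transport_preimage \<theta> \<theta>\<^sub>0 A}"
    using Gcdf_Qt[OF \<theta>\<^sub>0] by (auto simp: transport_preimage_def Qrange_def)
  then show ?thesis
    using A by (simp add: emeasure_HMed)
qed

lemma transport_preimage_subset:
  "transport_preimage \<theta> \<theta>\<^sub>0 A \<subseteq> Qt \<theta>\<^sub>0 ` {t. 0 < t \<and> t < 1 \<and> Qt \<theta> t \<in> A}"
  by (auto simp: transport_preimage_def Qrange_def intro!: image_eqI)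

lemma Qt_oscillation_le:
  assumes \<theta>: "0 < \<theta>" "\<theta> < 1"
    and I: "\<And>t. t \<in> I \<Longrightarrow> 0 < t \<and> t < 1 \<and> a < Qt \<theta> t \<and> Qt \<theta> t \<le> b"
    and "v \<in> I" "u \<in> I" "v' \<in> I" "u' \<in> I"
  shows "(1 - \<theta>) * (Qt 0 v - Qt 0 u) + \<theta> * (Qt 1 v' - Qt 1 u') \<le> b - a"
proof -
  define hi lo where "hi = max v v'" and "lo = min u u'"
  have hi: "hi \<in> I" "0 < hi" "hi < 1" and lo: "lo \<in> I" "0 < lo" "lo < 1"
    using assms(4-7) I by (auto simp: hi_def lo_def max_def min_def)
  have "Qt 0 v \<le> Qt 0 hi" "Qt 0 lo \<le> Qt 0 u" "Qt 1 v' \<le> Qt 1 hi" "Qt 1 lo \<le> Qt 1 u'"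
    using assms(4-7) I hi lo by (auto intro!: Qt_mono simp: hi_def lo_def)
  then have "(1 - \<theta>) * (Qt 0 v - Qt 0 u) + \<theta> * (Qt 1 v' - Qt 1 u')
      \<le> (1 - \<theta>) * (Qt 0 hi - Qt 0 lo) + \<theta> * (Qt 1 hi - Qt 1 lo)"
    using \<theta> by (intro add_mono mult_left_mono) auto
  also have "\<dots> = Qt \<theta> hi - Qt \<theta> lo"
    using Qt_convex_comb[of hi \<theta>] Qt_convex_comb[of lo \<theta>] hi lo by (simp add: algebra_simps)
  also have "\<dots> \<le> b - a"
    using I[OF hi(1)] I[OF lo(1)] by simp
  finally show ?thesis .
qed

lemma transport_preimage_Ioc_bound:
  assumes \<theta>: "0 < \<theta>" "\<theta> < 1" and "a \<le> b"
  shows "transport_preimage \<theta> 0 {a<..b} \<in> fmeasurable lborel"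
    and "transport_preimage \<theta> 1 {a<..b} \<in> fmeasurable lborel"
    and "(1 - \<theta>) * measure lborel (transport_preimage \<theta> 0 {a<..b})
      + \<theta> * measure lborel (transport_preimage \<theta> 1 {a<..b}) \<le> b - a"
proof -
  define I where "I = {t. 0 < t \<and> t < 1 \<and> Qt \<theta> t \<in> {a<..b}}"
  define T0 T1 where "T0 = transport_preimage \<theta> 0 {a<..b}" and "T1 = transport_preimage \<theta> 1 {a<..b}"
  have T0: "T0 \<subseteq> Qt 0 ` I" and T1: "T1 \<subseteq> Qt 1 ` I"
    unfolding T0_def T1_def I_def by (rule transport_preimage_subset)+
  have "T0 \<in> fmeasurable lborel \<and> T1 \<in> fmeasurable lborel \<and>
    (1 - \<theta>) * measure lborel T0 + \<theta> * measure lborel T1 \<le> b - a"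
  proof (cases "I = {}")
    case True
    then show ?thesis using T0 T1 \<open>a \<le> b\<close> by auto
  next
    case False
    then have ne: "Qt 0 ` I \<noteq> {}" "Qt 1 ` I \<noteq> {}"
      by auto
    have "(1 - \<theta>) * (x - x') + \<theta> * (y - y') \<le> b - a"
      if "x \<in> Qt 0 ` I" "x' \<in> Qt 0 ` I" "y \<in> Qt 1 ` I" "y' \<in> Qt 1 ` I" for x x' y y'
      using that \<theta> by (auto simp: I_def intro!: Qt_oscillation_le[of \<theta> I])
    note osc = weighted_oscillation_le[OF ne _ _ this]
    have T0_meas: "T0 \<in> fmeasurable lborel" "measure lborel T0 \<le> Sup (Qt 0 ` I) - Inf (Qt 0 ` I)"
      using T0 ne osc(1,2) \<theta> by (intro measure_le_Sup_minus_Inf; simp add: T0_def)+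
    have T1_meas: "T1 \<in> fmeasurable lborel" "measure lborel T1 \<le> Sup (Qt 1 ` I) - Inf (Qt 1 ` I)"
      using T1 ne osc(3,4) \<theta> by (intro measure_le_Sup_minus_Inf; simp add: T1_def)+
    have "(1 - \<theta>) * measure lborel T0 + \<theta> * measure lborel T1
        \<le> (1 - \<theta>) * (Sup (Qt 0 ` I) - Inf (Qt 0 ` I)) + \<theta> * (Sup (Qt 1 ` I) - Inf (Qt 1 ` I))"
      using T0_meas(2) T1_meas(2) \<theta> by (intro add_mono mult_left_mono) auto
    also have "\<dots> \<le> b - a"
      using osc(5) \<theta> by simp
    finally show ?thesis
      using T0_meas(1) T1_meas(1) by simp
  qed
  then show "T0 \<in> fmeasurable lborel" "T1 \<in> fmeasurable lborel"
    "(1 - \<theta>) * measure lborel T0 + \<theta> * measure lborel T1 \<le> b - a"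
    by auto
qed

definition transport_measure :: "real \<Rightarrow> real \<Rightarrow> real measure" where
  "transport_measure \<theta> \<theta>\<^sub>0 = distr (density lborel (indicator (Qrange \<theta>\<^sub>0))) borel (\<lambda>y. Qt \<theta> (Gcdf \<theta>\<^sub>0 y))"

lemma sets_transport_measure[simp]: "sets (transport_measure \<theta> \<theta>\<^sub>0) = sets borel"
  by (simp add: transport_measure_def)

lemma emeasure_transport_measure:
  assumes A: "A \<in> sets borel"
  shows "emeasure (transport_measure \<theta> \<theta>\<^sub>0) A = emeasure lborel (transport_preimage \<theta> \<theta>\<^sub>0 A)"
proof -
  have "(\<lambda>y. Qt \<theta> (Gcdf \<theta>\<^sub>0 y)) -` A \<in> sets borel"
    by (rule measurable_sets_borel[OF _ A]) simp
  moreover have "Qrange \<theta>\<^sub>0 \<inter> (\<lambda>y. Qt \<theta> (Gcdf \<theta>\<^sub>0 y)) -` A = transport_preimage \<theta> \<theta>\<^sub>0 A"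
    by (auto simp: transport_preimage_def)
  ultimately show ?thesis
    using A by (simp add: transport_measure_def emeasure_distr emeasure_restricted measurable_density_eq1)
qed

lemma transport_preimage_bound:
  assumes \<theta>: "0 < \<theta>" "\<theta> < 1" and A: "A \<in> sets borel"
  shows "ennreal (1 - \<theta>) * emeasure lborel (transport_preimage \<theta> 0 A)
    + ennreal \<theta> * emeasure lborel (transport_preimage \<theta> 1 A) \<le> emeasure lborel A"
proof -
  define M where "M = add_measure (scale_measure (ennreal (1 - \<theta>)) (transport_measure \<theta> 0))
    (scale_measure (ennreal \<theta>) (transport_measure \<theta> 1))"
  have M: "emeasure M B = ennreal (1 - \<theta>) * emeasure lborel (transport_preimage \<theta> 0 B)
      + ennreal \<theta> * emeasure lborel (transport_preimage \<theta> 1 B)" if "B \<in> sets borel" for B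
    unfolding M_def using that by (subst emeasure_add_measure) (auto simp: emeasure_transport_measure)
  have "emeasure M A \<le> emeasure lborel A"
  proof (rule emeasure_le_of_Ioc_le[OF _ _ _ _ A])
    fix a b :: real
    show "emeasure lborel {a<..b} < \<infinity>"
      by (cases "a \<le> b") auto
    assume "a \<le> b"
    note bound = transport_preimage_Ioc_bound[OF \<theta> this]
    have "emeasure M {a<..b} = ennreal ((1 - \<theta>) * measure lborel (transport_preimage \<theta> 0 {a<..b})
        + \<theta> * measure lborel (transport_preimage \<theta> 1 {a<..b}))"
      using bound(1,2) \<theta>
      by (simp add: M emeasure_eq_measure2 ennreal_mult'[symmetric] ennreal_plus[symmetric] del: ennreal_plus)
    also have "\<dots> \<le> emeasure lborel {a<..b}"
      using bound(3) \<open>a \<le> b\<close> by (simp add: ennreal_leI)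
    finally show "emeasure M {a<..b} \<le> emeasure lborel {a<..b}" .
  qed (simp_all add: M_def)
  then show ?thesis
    using A by (simp add: M)
qed

lemma HMed_absolutely_continuous:
  assumes \<theta>: "0 \<le> \<theta>" "\<theta> \<le> 1" and A: "A \<in> sets borel" and null: "emeasure lborel A = 0"
  shows "emeasure (HM \<theta>) A = 0"
proof -
  have fmax_null: "emeasure (density lborel fmax) B = 0" if "B \<in> sets borel" "emeasure lborel B = 0" for B
    using that by (simp add: emeasure_density nn_integral_null_set null_sets_def)
  show ?thesis
  proof (cases "\<theta> = 0 \<or> \<theta> = 1")
    case True
    then show ?thesis
      using HMed_le_fmax[OF True A] fmax_null[OF A null] by simp
  next
    case False
    then have \<theta>': "0 < \<theta>" "\<theta> < 1"
      using \<theta> by auto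
    have "ennreal (1 - \<theta>) * emeasure lborel (transport_preimage \<theta> 0 A) = 0"
      using transport_preimage_bound[OF \<theta>' A] null by (simp add: add_eq_0_iff_both_eq_0)
    then have "emeasure lborel (transport_preimage \<theta> 0 A) = 0"
      using \<theta>' by simp
    then have "emeasure (HM 0) (transport_preimage \<theta> 0 A) = 0"
      using HMed_le_fmax[of 0 "transport_preimage \<theta> 0 A"] fmax_null[of "transport_preimage \<theta> 0 A"] A
      by simp
    then show ?thesis
      using emeasure_HMed_transport[of 0 A \<theta>] A by simp
  qed
qed

lemma HMed_has_density:
  assumes "0 \<le> \<theta>" "\<theta> \<le> 1"
  shows "\<exists>g. is_density (HM \<theta>) g"
  using assms emeasure_HMed_UNIV[of \<theta>] HMed_absolutely_continuous
  by (intro is_density_exists) simp_all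

text \<open>Since \<open>ennreal\<close> truncates at \<open>0\<close>, \<open>excess s\<close> is \<open>\<integral> (fmax - s)\<^sup>+\<close>.\<close>

definition excess :: "real \<Rightarrow> ennreal" where
  "excess s = (\<integral>\<^sup>+x. ennreal (fmax x - s) \<partial>lborel)"

lemma HMed_le_excess_01:
  assumes \<theta>: "\<theta> = 0 \<or> \<theta> = 1" and s: "0 \<le> s" and A: "A \<in> sets borel"
  shows "emeasure (HM \<theta>) A \<le> ennreal s * emeasure lborel A + excess s"
proof -
  have split: "ennreal (fmax x) \<le> ennreal s + ennreal (fmax x - s)" for x
    using s by (cases "s \<le> fmax x") (simp_all flip: ennreal_plus add: add_increasing2 ennreal_leI)
  have "emeasure (HM \<theta>) A \<le> (\<integral>\<^sup>+x. ennreal (fmax x) * indicator A x \<partial>lborel)"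
    using HMed_le_fmax[OF \<theta> A] A by (simp add: emeasure_density)
  also have "\<dots> \<le> (\<integral>\<^sup>+x. ennreal s * indicator A x + ennreal (fmax x - s) * indicator A x \<partial>lborel)"
    using split by (intro nn_integral_mono) (simp add: indicator_def)
  also have "\<dots> = ennreal s * emeasure lborel A + (\<integral>\<^sup>+x. ennreal (fmax x - s) * indicator A x \<partial>lborel)"
    using A by (subst nn_integral_add) (auto simp: nn_integral_cmult_indicator)
  also have "\<dots> \<le> ennreal s * emeasure lborel A + excess s"
    unfolding excess_def by (intro add_left_mono nn_integral_mono) (simp add: indicator_def)
  finally show ?thesis .
qed

lemma HMed_le_excess:
  assumes \<theta>: "0 \<le> \<theta>" "\<theta> \<le> 1" and s: "0 \<le> s" and A: "A \<in> sets borel"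
  shows "emeasure (HM \<theta>) A \<le> ennreal s * emeasure lborel A + excess s"
proof (cases "\<theta> = 0 \<or> \<theta> = 1")
  case True
  then show ?thesis by (rule HMed_le_excess_01[OF _ s A])
next
  case False
  then have \<theta>': "0 < \<theta>" "\<theta> < 1"
    using \<theta> by auto
  define c0 c1 where "c0 = ennreal (1 - \<theta>)" and "c1 = ennreal \<theta>"
  define L0 L1 where "L0 = emeasure lborel (transport_preimage \<theta> 0 A)"
    and "L1 = emeasure lborel (transport_preimage \<theta> 1 A)"
  have c: "c0 + c1 = 1"
    using \<theta>' by (simp add: c0_def c1_def flip: ennreal_plus)
  have "emeasure (HM \<theta>) A = c0 * emeasure (HM 0) (transport_preimage \<theta> 0 A)
      + c1 * emeasure (HM 1) (transport_preimage \<theta> 1 A)"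
    using emeasure_HMed_transport[of 0 A \<theta>] emeasure_HMed_transport[of 1 A \<theta>] A c
    by (simp flip: distrib_right)
  also have "\<dots> \<le> c0 * (ennreal s * L0 + excess s) + c1 * (ennreal s * L1 + excess s)"
    unfolding L0_def L1_def using A s by (intro add_mono mult_left_mono HMed_le_excess_01) auto
  also have "\<dots> = ennreal s * (c0 * L0 + c1 * L1) + (c0 + c1) * excess s"
    by (simp add: algebra_simps)
  also have "\<dots> = ennreal s * (c0 * L0 + c1 * L1) + excess s"
    by (simp only: c mult_1)
  also have "\<dots> \<le> ennreal s * emeasure lborel A + excess s"
    unfolding L0_def L1_def c0_def c1_def
    using transport_preimage_bound[OF \<theta>' A] by (intro add_mono mult_left_mono) auto
  finally show ?thesis .
qed

lemma nn_integral_density_excess_le: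
  assumes \<theta>: "0 \<le> \<theta>" "\<theta> \<le> 1" and g: "is_density (HM \<theta>) g" and r: "0 < r"
  shows "(\<integral>\<^sup>+x. ennreal (g x - r) \<partial>lborel) \<le> excess r"
proof -
  note g_props = is_density_HMedD[OF g]
  have [measurable]: "g \<in> borel_measurable borel"
    by (rule g_props(1))
  define A where "A = {x. r < g x}"
  have A: "A \<in> sets borel"
    unfolding A_def by measurable
  have "ennreal (g x) * indicator A x = ennreal (g x - r) + ennreal r * indicator A x" for x
    using r by (cases "x \<in> A") (auto simp: A_def ennreal_eq_0_iff simp flip: ennreal_plus)
  then have split: "emeasure (HM \<theta>) A = (\<integral>\<^sup>+x. ennreal (g x - r) \<partial>lborel) + ennreal r * emeasure lborel A"
    using A by (simp add: g_props(3) nn_integral_add nn_integral_cmult_indicator)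
  have "ennreal r * emeasure lborel A \<le> emeasure (HM \<theta>) A"
    unfolding split by simp
  also have "\<dots> \<le> emeasure (HM \<theta>) UNIV"
    by (rule emeasure_mono) auto
  finally have fin: "ennreal r * emeasure lborel A \<noteq> \<infinity>"
    by (auto simp: emeasure_HMed_UNIV top_unique)
  have "ennreal r * emeasure lborel A + (\<integral>\<^sup>+x. ennreal (g x - r) \<partial>lborel) \<le> ennreal r * emeasure lborel A + excess r"
    using HMed_le_excess[OF \<theta> _ A, of r] r by (simp add: split add.commute)
  then show ?thesis
    using fin by (simp add: ennreal_add_left_cancel_le)
qed

lemma density_AE_le:
  assumes \<theta>: "0 \<le> \<theta>" "\<theta> \<le> 1" and g: "is_density (HM \<theta>) g"
    and C: "0 \<le> C" "AE x in lborel. fmax x \<le> C"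
  shows "AE x in lborel. g x \<le> C"
proof -
  note g_props = is_density_HMedD[OF g]
  have [measurable]: "g \<in> borel_measurable borel"
    by (rule g_props(1))
  have "AE x in lborel. g x \<le> r" if r: "C < r" for r
  proof -
    have "excess r = 0"
      unfolding excess_def using C(2) r
      by (subst nn_integral_0_iff_AE) (auto elim!: eventually_mono simp: ennreal_eq_0_iff)
    then have "(\<integral>\<^sup>+x. ennreal (g x - r) \<partial>lborel) = 0"
      using nn_integral_density_excess_le[OF \<theta> g, of r] C(1) r by simp
    then show ?thesis
      by (subst (asm) nn_integral_0_iff_AE) (auto elim!: eventually_mono simp: ennreal_eq_0_iff)
  qed
  then have "AE x in lborel. \<forall>n. g x \<le> C + 1 / Suc n"
    using C(1) by (simp add: AE_all_countable)
  then show ?thesis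
  proof eventually_elim
    fix x assume bound: "\<forall>n. g x \<le> C + 1 / Suc n"
    show "g x \<le> C"
    proof (rule field_le_epsilon)
      fix e :: real assume "0 < e"
      then obtain n where "1 / Suc n < e"
        by (rule nat_approx_posE)
      then show "g x \<le> C + e"
        using bound[rule_format, of n] by simp
    qed
  qed
qed

lemma nn_integral_density_powr_le:
  assumes \<theta>: "0 \<le> \<theta>" "\<theta> \<le> 1" and g: "is_density (HM \<theta>) g" and p: "1 \<le> p"
  shows "(\<integral>\<^sup>+x. ennreal (g x powr p) \<partial>lborel) \<le> (\<integral>\<^sup>+x. ennreal (fmax x powr p) \<partial>lborel)"
proof (cases "p = 1")
  case True
  have "(\<integral>\<^sup>+x. ennreal (g x) \<partial>lborel) = emeasure (HM \<theta>) UNIV"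
    using is_density_HMedD(3)[OF g, of UNIV] by simp
  also have "\<dots> \<le> excess 0"
    using HMed_le_excess[OF \<theta>, of 0 UNIV] by simp
  finally show ?thesis
    using True is_density_HMedD(2)[OF g] fmax_nonneg by (simp add: excess_def)
next
  case False
  note g_props = is_density_HMedD[OF g]
  have "(\<integral>\<^sup>+x. ennreal (g x powr p) \<partial>lborel)
      = (\<integral>\<^sup>+r. layer_kernel p r * (\<integral>\<^sup>+x. ennreal (g x - r) \<partial>lborel) \<partial>lborel)"
    using False p g_props(1,2) by (intro nn_integral_powr_layer_cake sigma_finite_lborel) auto
  also have "\<dots> \<le> (\<integral>\<^sup>+r. layer_kernel p r * excess r \<partial>lborel)"
  proof (intro nn_integral_mono)
    fix r :: real
    show "layer_kernel p r * (\<integral>\<^sup>+x. ennreal (g x - r) \<partial>lborel) \<le> layer_kernel p r * excess r"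
      using nn_integral_density_excess_le[OF \<theta> g, of r]
      by (cases "0 < r") (simp_all add: layer_kernel_def mult_left_mono)
  qed
  also have "\<dots> = (\<integral>\<^sup>+x. ennreal (fmax x powr p) \<partial>lborel)"
    unfolding excess_def using False p fmax_nonneg
    by (intro nn_integral_powr_layer_cake[symmetric] sigma_finite_lborel) auto
  finally show ?thesis .
qed

lemma HMed_01_density_bounds:
  "\<exists>g0 g1. is_density (HM 0) g0 \<and> is_density (HM 1) g1 \<and>
    (AE x in lborel. fmin x \<le> min (g0 x) (g1 x) \<and> max (g0 x) (g1 x) \<le> fmax x)"
proof -
  have "\<exists>g. is_density (HM 0) g" "\<exists>g. is_density (HM 1) g"
    by (rule HMed_has_density; simp)+
  then obtain g0 g1 where g0: "is_density (HM 0) g0" and g1: "is_density (HM 1) g1"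
    by blast
  have "AE x in lborel. fmin x \<le> g0 x \<and> g0 x \<le> fmax x"
    by (rule is_density_HMed_bounds[OF _ g0]) simp
  moreover have "AE x in lborel. fmin x \<le> g1 x \<and> g1 x \<le> fmax x"
    by (rule is_density_HMed_bounds[OF _ g1]) simp
  ultimately have "AE x in lborel. fmin x \<le> min (g0 x) (g1 x) \<and> max (g0 x) (g1 x) \<le> fmax x"
    by eventually_elim simp
  then show ?thesis
    using g0 g1 by blast
qed

lemma HMed_density_Lp_norm_le:
  assumes p: "1 \<le> p" and f_Lp: "\<forall>i<N. memLp p (f i)"
    and \<theta>: "0 \<le> \<theta>" "\<theta> \<le> 1" and g: "is_density (HM \<theta>) g"
  shows "memLp p g \<and> Lp_norm p g \<le> Lp_norm p fmax \<and> Lp_norm p fmax \<le> (\<Sum>i<N. Lp_norm p (f i))"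
proof -
  note g_props = is_density_HMedD[OF g]
  have fmax_eq: "fmax = (\<lambda>x. Max ((\<lambda>i. f i x) ` {..<N}))"
    by (simp add: fmax_def[abs_def])
  show ?thesis
  proof (cases p)
    case (real q)
    then have q: "1 \<le> q"
      using p by simp
    have fmax_Lp: "memLp (ereal q) fmax" "Lp_norm (ereal q) fmax \<le> (\<Sum>i<N. Lp_norm (ereal q) (f i))"
      unfolding fmax_eq using Lp_norm_Max_le_sum_real[of N f q] N_pos f_measurable f_nonneg q f_Lp real by auto
    show ?thesis
      using fmax_Lp Lp_norm_le_of_nn_integral_powr_le[OF q g_props(1,2) fmax_nonneg fmax_Lp(1) nn_integral_density_powr_le[OF \<theta> g q]]
      by (simp add: real)
  next
    case PInf
    have fmax_Linf: "memLp \<infinity> fmax" "Lp_norm \<infinity> fmax \<le> (\<Sum>i<N. Lp_norm \<infinity> (f i))"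
      unfolding fmax_eq using Lp_norm_Max_le_sum_infinity[of N f] N_pos f_measurable f_nonneg f_Lp PInf by auto
    show ?thesis
      using fmax_Linf Lp_norm_infinity_le_of_AE_le[OF g_props(1) fmax_measurable g_props(2) fmax_nonneg fmax_Linf(1)]
        density_AE_le[OF \<theta> g] by (simp add: PInf)
  qed (use p in simp)
qed

end

theorem theorem4p7:
  fixes N :: nat and lam :: "nat \<Rightarrow> real" and \<nu> :: "nat \<Rightarrow> real measure"
    and f :: "nat \<Rightarrow> real \<Rightarrow> real"
  assumes lam_nonneg: "\<forall>i<N. 0 \<le> lam i" and lam_sum: "(\<Sum>i<N. lam i) = 1"
    and nu_prob: "\<forall>i<N. prob_space (\<nu> i) \<and> sets (\<nu> i) = sets borel"
    and nu_P1: "\<forall>i<N. integrable (\<nu> i) (\<lambda>x. x)"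
    and f_dens: "\<forall>i<N. is_density (\<nu> i) (f i)"
    and f_L1: "\<forall>i<N. integrable lborel (f i)"
  shows
    "(\<exists>g0 g1. is_density (HMed N lam 0 \<nu>) g0 \<and> is_density (HMed N lam 1 \<nu>) g1 \<and>
        (AE x in lborel.
           Min ((\<lambda>i. f i x) ` {..<N}) \<le> min (g0 x) (g1 x) \<and>
           max (g0 x) (g1 x) \<le> Max ((\<lambda>i. f i x) ` {..<N})))
   \<and> (\<forall>\<theta>\<in>{0..1}. \<exists>g. is_density (HMed N lam \<theta> \<nu>) g)
   \<and> (\<forall>p::ereal. 1 \<le> p \<longrightarrow> (\<forall>i<N. memLp p (f i)) \<longrightarrow>
        (\<forall>\<theta>\<in>{0..1}. \<forall>g. is_density (HMed N lam \<theta> \<nu>) g \<longrightarrow>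
           memLp p g \<and>
           Lp_norm p g \<le> Lp_norm p (\<lambda>x. Max ((\<lambda>i. f i x) ` {..<N})) \<and>
           Lp_norm p (\<lambda>x. Max ((\<lambda>i. f i x) ` {..<N})) \<le> (\<Sum>i<N. Lp_norm p (f i))))"
proof -
  interpret median_selection_density N lam \<nu> f
    using lam_nonneg lam_sum nu_prob f_dens by unfold_locales
  have fmax_eq: "Max ((\<lambda>i. f i x) ` {..<N}) = fmax x"
    and fmin_eq: "Min ((\<lambda>i. f i x) ` {..<N}) = fmin x" for x
    by (simp_all add: fmax_def fmin_def)
  show ?thesis
    unfolding fmax_eq fmin_eq
    using HMed_01_density_bounds HMed_has_density HMed_density_Lp_norm_le by auto
qed

end
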